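(* Let $p$ be a prime and $V$ a vector space of dimension $d$ over $\mathbb{F}_p$. Let $G_0\le \mathrm{GL}(V)$ be a solvable group acting irreducibly and quasi-primitively on $V$, let $G=V\rtimes G_0$, and let $W$, $A$, $F$, $e$ be structure data for $G_0$ as described in the context. Then \[ \mathrm{rank}(G)\;\ge\;\left\lceil \frac{|W|^{e}-1}{\log_2(|W|)\cdot |A/F|\cdot e^2\cdot (|W|-1)}\right\rceil+1 . \]
   Context: $G=V\rtimes G_0$ is regarded as a permutation group on $V$ (translations together with the linear action of $G_0$). The rank of $G$, $\mathrm{rank}(G)$, is the number of orbits of $G_0$ on $V$, including the orbit $\{0\}$. $G_0$ is quasi-primitive on $V$: every normal subgroup of $G_0$ acts homogeneously on $V$ (the restriction of $V$ to it is a direct sum of pairwise isomorphic irreducible modules). Structure data: subgroups $Z(E)\le U\le F\le A\le G_0$, each normal in $G_0$, and a characteristic subgroup $E$ of $F$, such that: (i) $F=EU$ is a central product with $E\cap U=Z(E)$; (ii) $F/U\cong E/Z(E)$ and $E/Z(E)$ is a direct sum of completely reducible $G_0/F$-modules (action by conjugation); (iii) $E=E_1\times\cdots\times E_s$ with $E_i$ an extraspecial $q_i$-group of order $q_i^{2m_i+1}$, the $q_i$ distinct primes and $m_i\ge 1$; $e:=\prod_i q_i^{m_i}$ (so $|E/Z(E)|=e^2$), $e\mid d$ and $\gcd(p,e)=1$; (iv) $A=C_{G_0}(U)$ and $A/F$ acts faithfully on $E/Z(E)$; (v) $U$ is cyclic and acts fixed-point-freely on $W$, an irreducible $\mathbb{F}_pU$-submodule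 of $V$; (vi) $|U|$ divides $p^k-1$ for some integer $k\ge1$, and $W$ is identified with the $\mathbb{F}_p$-span of $U$, isomorphic to $\mathbb{F}_{p^k}$, so $|W|=p^k$; (vii) $|V|=|W|^{eb}$ for some positive integer $b$, so $d=bke$. (Such data exist for every finite solvable irreducible quasi-primitive linear group, by a known structure theorem.) *)

theory Defs
  imports "HOL-Algebra.Algebra" Complex_Main
begin

section \<open>The vector space V = F_p^d (coordinates in {0..<p}, zero beyond d)\<close>

type_synonym vec = "nat \<Rightarrow> nat"
type_synonym lmap = "vec \<Rightarrow> vec"

definition vecs :: "nat \<Rightarrow> nat \<Rightarrow> vec set" where
  "vecs p d = {v. (\<forall>i<d. v i < p) \<and> (\<forall>i\<ge>d. v i = 0)}"

definition vzero :: vec where "vzero = (\<lambda>_. 0)"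

definition vadd :: "nat \<Rightarrow> vec \<Rightarrow> vec \<Rightarrow> vec" where
  "vadd p v w = (\<lambda>i. (v i + w i) mod p)"

definition vsmul :: "nat \<Rightarrow> nat \<Rightarrow> vec \<Rightarrow> vec" where
  "vsmul p c v = (\<lambda>i. (c * v i) mod p)"

definition vsum :: "nat \<Rightarrow> 'i set \<Rightarrow> ('i \<Rightarrow> vec) \<Rightarrow> vec" where
  "vsum p I w = (\<lambda>k. sum (\<lambda>i. w i k) I mod p)"

definition linear_on :: "nat \<Rightarrow> vec set \<Rightarrow> vec set \<Rightarrow> lmap \<Rightarrow> bool" where
  "linear_on p XX YY f \<longleftrightarrow> f \<in> Pi XX (\<lambda>_. YY) \<and>
     (\<forall>v\<in>XX. \<forall>w\<in>XX. f (vadd p v w) = vadd p (f v) (f w)) \<and>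
     (\<forall>c<p. \<forall>v\<in>XX. f (vsmul p c v) = vsmul p c (f v))"

definition GL :: "nat \<Rightarrow> nat \<Rightarrow> lmap set" where
  "GL p d = {f. linear_on p (vecs p d) (vecs p d) f \<and> bij_betw f (vecs p d) (vecs p d)
                 \<and> f \<in> extensional (vecs p d)}"

definition GLgrp :: "nat \<Rightarrow> nat \<Rightarrow> lmap monoid" where
  "GLgrp p d = \<lparr>carrier = GL p d, monoid.mult = (\<lambda>f g. compose (vecs p d) f g),
                monoid.one = restrict id (vecs p d)\<rparr>"

definition subspace_of :: "nat \<Rightarrow> nat \<Rightarrow> vec set \<Rightarrow> bool" where
  "subspace_of p d W \<longleftrightarrow> W \<subseteq> vecs p d \<and> vzero \<in> W \<and>
     (\<forall>v\<in>W. \<forall>w\<in>W. vadd p v w \<in> W) \<and> (\<forall>c<p. \<forall>v\<in>W. vsmul p c v \<in> W)"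

definition invariant :: "lmap set \<Rightarrow> vec set \<Rightarrow> bool" where
  "invariant S W \<longleftrightarrow> (\<forall>g\<in>S. \<forall>w\<in>W. g w \<in> W)"

definition irr_submodule :: "nat \<Rightarrow> nat \<Rightarrow> lmap set \<Rightarrow> vec set \<Rightarrow> bool" where
  "irr_submodule p d S W \<longleftrightarrow> subspace_of p d W \<and> invariant S W \<and> W \<noteq> {vzero} \<and>
     (\<forall>XX. subspace_of p d XX \<and> XX \<subseteq> W \<and> invariant S XX \<longrightarrow> XX = {vzero} \<or> XX = W)"

definition iso_submodules :: "nat \<Rightarrow> lmap set \<Rightarrow> vec set \<Rightarrow> vec set \<Rightarrow> bool" where
  "iso_submodules p S W1 W2 \<longleftrightarrow> (\<exists>\<phi>. bij_betw \<phi> W1 W2 \<and> linear_on p W1 W2 \<phi> \<and>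
     (\<forall>g\<in>S. \<forall>w\<in>W1. \<phi> (g w) = g (\<phi> w)))"

text \<open>V restricted to S is a direct sum of pairwise isomorphic irreducible S-modules.\<close>
definition homogeneous :: "nat \<Rightarrow> nat \<Rightarrow> lmap set \<Rightarrow> bool" where
  "homogeneous p d S \<longleftrightarrow> (\<exists>(I::nat set) Ws. finite I \<and>
     (\<forall>i\<in>I. irr_submodule p d S (Ws i)) \<and>
     (\<forall>i\<in>I. \<forall>j\<in>I. iso_submodules p S (Ws i) (Ws j)) \<and>
     bij_betw (vsum p I) (Pi\<^sub>E I Ws) (vecs p d))"

definition quasi_primitive :: "nat \<Rightarrow> nat \<Rightarrow> lmap set \<Rightarrow> bool" where
  "quasi_primitive p d G0 \<longleftrightarrow>
     (\<forall>N. N \<lhd> (GLgrp p d)\<lparr>carrier := G0\<rparr> \<longrightarrow> homogeneous p d N)"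

text \<open>rank(V \<rtimes> G0) = number of G0-orbits on V.\<close>
definition rank_affine :: "nat \<Rightarrow> nat \<Rightarrow> lmap set \<Rightarrow> nat" where
  "rank_affine p d G0 = card ((\<lambda>v. (\<lambda>g. g v) ` G0) ` vecs p d)"

definition centre :: "('a, 'b) monoid_scheme \<Rightarrow> 'a set \<Rightarrow> 'a set" where
  "centre G H = {z\<in>H. \<forall>h\<in>H. z \<otimes>\<^bsub>G\<^esub> h = h \<otimes>\<^bsub>G\<^esub> z}"

definition centralizer_in :: "('a, 'b) monoid_scheme \<Rightarrow> 'a set \<Rightarrow> 'a set \<Rightarrow> 'a set" where
  "centralizer_in G H U = {g\<in>H. \<forall>u\<in>U. g \<otimes>\<^bsub>G\<^esub> u = u \<otimes>\<^bsub>G\<^esub> g}"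

definition maximal_subgroup :: "('a, 'b) monoid_scheme \<Rightarrow> 'a set \<Rightarrow> 'a set \<Rightarrow> bool" where
  "maximal_subgroup G H M \<longleftrightarrow> subgroup M G \<and> M \<subset> H \<and>
     (\<forall>K. subgroup K G \<and> M \<subseteq> K \<and> K \<subseteq> H \<longrightarrow> K = M \<or> K = H)"

definition frattini :: "('a, 'b) monoid_scheme \<Rightarrow> 'a set \<Rightarrow> 'a set" where
  "frattini G H = H \<inter> \<Inter> {M. maximal_subgroup G H M}"

definition extraspecial :: "('a, 'b) monoid_scheme \<Rightarrow> 'a set \<Rightarrow> nat \<Rightarrow> nat \<Rightarrow> bool" where
  "extraspecial G P q m \<longleftrightarrow> subgroup P G \<and> Factorial_Ring.prime q \<and> card P = q ^ (2 * m + 1) \<and>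
     card (centre G P) = q \<and> derived G P = centre G P \<and> frattini G P = centre G P"

definition characteristic :: "('a, 'b) monoid_scheme \<Rightarrow> 'a set \<Rightarrow> 'a set \<Rightarrow> bool" where
  "characteristic G E F \<longleftrightarrow>
     (\<forall>\<phi>\<in>iso (G\<lparr>carrier := F\<rparr>) (G\<lparr>carrier := F\<rparr>). \<phi> ` E = E)"

definition conj_invariant :: "('a, 'b) monoid_scheme \<Rightarrow> 'a set \<Rightarrow> 'a set \<Rightarrow> bool" where
  "conj_invariant G H XX \<longleftrightarrow>
     (\<forall>g\<in>H. \<forall>x\<in>XX. g \<otimes>\<^bsub>G\<^esub> x \<otimes>\<^bsub>G\<^esub> inv\<^bsub>G\<^esub> g \<in> XX)"

text \<open>The section E/Z (Z normal in E) is completely reducible under conjugation by H: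
  every H-invariant subgroup between Z and E has an H-invariant complement mod Z.\<close>
definition compl_reducible_section ::
    "('a, 'b) monoid_scheme \<Rightarrow> 'a set \<Rightarrow> 'a set \<Rightarrow> 'a set \<Rightarrow> bool" where
  "compl_reducible_section G H E Z \<longleftrightarrow>
     (\<forall>XX. subgroup XX G \<and> Z \<subseteq> XX \<and> XX \<subseteq> E \<and> conj_invariant G H XX \<longrightarrow>
        (\<exists>YY. subgroup YY G \<and> Z \<subseteq> YY \<and> YY \<subseteq> E \<and> conj_invariant G H YY \<and>
             XX \<inter> YY = Z \<and> XX <#>\<^bsub>G\<^esub> YY = E))"

definition gprod :: "('a, 'b) monoid_scheme \<Rightarrow> nat \<Rightarrow> (nat \<Rightarrow> 'a) \<Rightarrow> 'a" where
  "gprod G s x = foldr (\<lambda>i acc. x i \<otimes>\<^bsub>G\<^esub> acc) [0..<s] \<one>\<^bsub>G\<^esub>"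

definition internal_direct_product ::
    "('a, 'b) monoid_scheme \<Rightarrow> 'a set \<Rightarrow> nat \<Rightarrow> (nat \<Rightarrow> 'a set) \<Rightarrow> bool" where
  "internal_direct_product G E s Es \<longleftrightarrow>
     (\<forall>i<s. subgroup (Es i) G) \<and>
     (\<forall>i<s. \<forall>j<s. i \<noteq> j \<longrightarrow> (\<forall>x\<in>Es i. \<forall>y\<in>Es j. x \<otimes>\<^bsub>G\<^esub> y = y \<otimes>\<^bsub>G\<^esub> x)) \<and>
     bij_betw (gprod G s) (Pi\<^sub>E {..<s} Es) E"

end

theory Submission
  imports Defs "HOL-Computational_Algebra.Polynomial"
begin

text \<open>Counting orbits, \<open>|V| - 1 \<le> (rank(G) - 1) |G\<^sub>0|\<close>, so it suffices to bound \<open>|G\<^sub>0|\<close>. Write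
  \<open>U = \<langle>u\<rangle>\<close>. By orbit-stabiliser, \<open>|G\<^sub>0|\<close> is the size of the class \<open>C\<close> of \<open>u\<close> under conjugation by \<open>G\<^sub>0\<close>
  times \<open>|A|\<close>, since \<open>A\<close> is the centraliser of \<open>u\<close>; and \<open>|A| = |A/F| |E/Z(E)| |U| \<le> |A/F| e\<^sup>2 (|W| - 1)\<close>.
  It remains to show \<open>|C| \<le> k \<le> log\<^sub>2 |W|\<close>. By pigeonhole (\<open>|W| = p\<^sup>k\<close>) some polynomial of degree at
  most \<open>k\<close> kills a nonzero \<open>w \<in> W\<close> under \<open>u\<close>. By quasi-primitivity \<open>V\<close> is a sum of isomorphic
  irreducible \<open>U\<close>-modules, so the polynomial kills \<open>u\<close> on all of \<open>V\<close>, and hence every conjugate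
  \<open>g u g\<^sup>-\<^sup>1\<close> too. The conjugates lie in \<open>U\<close>, so they are powers of \<open>u\<close>, and on \<open>W\<close> the algebra
  \<open>\<F>\<^sub>p[u]\<close> is a field because \<open>U\<close> acts fixed-point-freely: the conjugates are distinct roots of one
  polynomial of degree at most \<open>k\<close> in a field.\<close>

section \<open>The space \<open>\<F>\<^sub>p\<^sup>d\<close> and its general linear group\<close>

lemma vecs_coord_less: "v \<in> vecs p d \<Longrightarrow> 0 < p \<Longrightarrow> v i < p"
  unfolding vecs_def by (cases "i < d") auto

lemma finite_vecs:
  assumes "0 < p"
  shows "finite (vecs p d)"
proof -
  have "vecs p d \<subseteq> (\<lambda>f i. if i < d then f i else 0) ` (PiE {..<d} (\<lambda>_. {..<p}))"
  proof
    fix v assume v: "v \<in> vecs p d"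
    show "v \<in> (\<lambda>f i. if i < d then f i else 0) ` (PiE {..<d} (\<lambda>_. {..<p}))"
      by (rule image_eqI[where x = "restrict v {..<d}"])
         (use v vecs_coord_less[OF v assms] in \<open>auto simp: vecs_def fun_eq_iff PiE_def extensional_def\<close>)
  qed
  moreover have "finite (PiE {..<d} (\<lambda>_. {..<p}))" by (rule finite_PiE) auto
  ultimately show ?thesis by (meson finite_surj)
qed

lemma vzero_in_vecs: "0 < p \<Longrightarrow> vzero \<in> vecs p d"
  by (simp add: vecs_def vzero_def)

lemma vadd_in_vecs: "v \<in> vecs p d \<Longrightarrow> w \<in> vecs p d \<Longrightarrow> 0 < p \<Longrightarrow> vadd p v w \<in> vecs p d"
  by (auto simp: vecs_def vadd_def)

lemma vsmul_in_vecs: "v \<in> vecs p d \<Longrightarrow> 0 < p \<Longrightarrow> vsmul p c v \<in> vecs p d"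
  by (auto simp: vecs_def vsmul_def)

lemma subspace_of_vecs: "0 < p \<Longrightarrow> subspace_of p d (vecs p d)"
  by (simp add: subspace_of_def vzero_in_vecs vadd_in_vecs vsmul_in_vecs)

lemma vadd_vzero_left: "v \<in> vecs p d \<Longrightarrow> 0 < p \<Longrightarrow> vadd p vzero v = v"
  using vecs_coord_less by (simp add: vadd_def vzero_def fun_eq_iff)

lemma vadd_vzero_right: "v \<in> vecs p d \<Longrightarrow> 0 < p \<Longrightarrow> vadd p v vzero = v"
  using vecs_coord_less by (simp add: vadd_def vzero_def fun_eq_iff)

lemma vadd_comm: "vadd p a b = vadd p b a"
  by (simp add: vadd_def add.commute)

lemma vadd_assoc: "vadd p (vadd p a b) c = vadd p a (vadd p b c)"
  by (simp add: vadd_def fun_eq_iff mod_add_left_eq mod_add_right_eq add.assoc)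

lemma vadd_left_commute: "vadd p a (vadd p b c) = vadd p b (vadd p a c)"
  by (metis vadd_assoc vadd_comm)

lemmas vadd_ac = vadd_comm vadd_assoc vadd_left_commute

lemma vadd_eq_right_imp_vzero:
  assumes "a \<in> vecs p d" "b \<in> vecs p d" "0 < p" "vadd p a b = b"
  shows "a = vzero"
proof
  fix i
  have "a i < p" "b i < p" using assms vecs_coord_less by auto
  moreover have "(a i + b i) mod p = b i" using assms(4) by (metis vadd_def)
  ultimately show "a i = vzero i"
    by (cases "a i + b i < p") (auto simp: vzero_def le_mod_geq)
qed

lemma vsmul_0_left: "vsmul p 0 v = vzero"
  by (simp add: vsmul_def vzero_def)

lemma vsmul_vzero: "vsmul p c vzero = vzero"
  by (simp add: vsmul_def vzero_def)

lemma vsmul_1_left: "v \<in> vecs p d \<Longrightarrow> 1 < p \<Longrightarrow> vsmul p 1 v = v"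
  using vecs_coord_less by (simp add: vsmul_def fun_eq_iff)

lemma vsmul_vadd: "vsmul p c (vadd p v w) = vadd p (vsmul p c v) (vsmul p c w)"
  by (simp add: vsmul_def vadd_def fun_eq_iff mod_mult_right_eq distrib_left mod_add_eq)

lemma vsmul_vsmul: "vsmul p c (vsmul p c' v) = vsmul p (c * c') v"
  by (simp add: vsmul_def fun_eq_iff mod_mult_right_eq mult.assoc)

lemma vsmul_commute: "vsmul p c (vsmul p c' v) = vsmul p c' (vsmul p c v)"
  by (simp add: vsmul_vsmul mult.commute)

lemma linear_on_vzero:
  assumes "linear_on p XX YY f" "vzero \<in> XX" "0 < p"
  shows "f vzero = vzero"
proof -
  have "f (vsmul p 0 vzero) = vsmul p 0 (f vzero)" using assms unfolding linear_on_def by blast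
  thus ?thesis by (simp add: vsmul_0_left)
qed

abbreviation endo :: "nat \<Rightarrow> nat \<Rightarrow> lmap \<Rightarrow> bool" where
  "endo p d t \<equiv> linear_on p (vecs p d) (vecs p d) t"

lemma endo_in_vecs: "endo p d t \<Longrightarrow> v \<in> vecs p d \<Longrightarrow> t v \<in> vecs p d"
  by (auto simp: linear_on_def)

lemma endo_vadd: "endo p d t \<Longrightarrow> v \<in> vecs p d \<Longrightarrow> w \<in> vecs p d \<Longrightarrow> t (vadd p v w) = vadd p (t v) (t w)"
  by (auto simp: linear_on_def)

lemma endo_vsmul: "endo p d t \<Longrightarrow> c < p \<Longrightarrow> v \<in> vecs p d \<Longrightarrow> t (vsmul p c v) = vsmul p c (t v)"
  by (auto simp: linear_on_def)

lemma endo_vzero: "endo p d t \<Longrightarrow> 0 < p \<Longrightarrow> t vzero = vzero"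
  using linear_on_vzero vzero_in_vecs by blast

lemma endo_funpow:
  assumes "endo p d t"
  shows "endo p d (t ^^ n)"
  by (induction n) (use assms in \<open>auto simp: linear_on_def Pi_def\<close>)

lemma vsmul_eq_vzero_imp:
  assumes p: "Factorial_Ring.prime p" and w: "w \<in> vecs p d" "w \<noteq> vzero"
    and c: "c < p" and eq: "vsmul p c w = vzero"
  shows "c = 0"
proof -
  obtain i where i: "w i \<noteq> 0" using w(2) by (auto simp: vzero_def)
  have "p dvd c * w i" using fun_cong[OF eq, of i] by (simp add: vsmul_def vzero_def dvd_eq_mod_eq_0)
  moreover have "w i < p" using vecs_coord_less w(1) p prime_gt_0_nat by blast
  ultimately show ?thesis using p c i by (auto simp: prime_dvd_mult_iff dest: dvd_imp_le)
qed

lemma subspace_of_kernel: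
  assumes L: "endo p d L" and p: "0 < p" and M: "subspace_of p d M"
  shows "subspace_of p d {x \<in> M. L x = vzero}"
  unfolding subspace_of_def
proof (intro conjI ballI allI impI)
  have M_vecs: "M \<subseteq> vecs p d" using M by (simp add: subspace_of_def)
  thus "{x \<in> M. L x = vzero} \<subseteq> vecs p d" by auto
  show "vzero \<in> {x \<in> M. L x = vzero}" using M endo_vzero[OF L p] by (simp add: subspace_of_def)
  fix v w assume "v \<in> {x \<in> M. L x = vzero}" "w \<in> {x \<in> M. L x = vzero}"
  moreover have "v \<in> vecs p d" "w \<in> vecs p d" using calculation M_vecs by auto
  ultimately show "vadd p v w \<in> {x \<in> M. L x = vzero}"
    using M endo_vadd[OF L] vadd_vzero_left[OF vzero_in_vecs[OF p] p] by (auto simp: subspace_of_def)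
next
  fix c v assume "c < p" "v \<in> {x \<in> M. L x = vzero}"
  moreover have "v \<in> vecs p d" using calculation M by (auto simp: subspace_of_def)
  ultimately show "vsmul p c v \<in> {x \<in> M. L x = vzero}"
    using M endo_vsmul[OF L] by (auto simp: subspace_of_def vsmul_vzero)
qed

lemma GL_endo: "f \<in> GL p d \<Longrightarrow> endo p d f"
  by (simp add: GL_def)

lemma GL_bij: "f \<in> GL p d \<Longrightarrow> bij_betw f (vecs p d) (vecs p d)"
  by (simp add: GL_def)

lemma GL_in_vecs: "f \<in> GL p d \<Longrightarrow> v \<in> vecs p d \<Longrightarrow> f v \<in> vecs p d"
  by (simp add: GL_def linear_on_def Pi_def)

lemma finite_GL:
  assumes "0 < p"
  shows "finite (GL p d)"
proof (rule finite_subset)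
  show "GL p d \<subseteq> PiE (vecs p d) (\<lambda>_. vecs p d)"
    unfolding GL_def linear_on_def PiE_def by auto
  show "finite (PiE (vecs p d) (\<lambda>_. vecs p d))"
    using finite_vecs[OF assms] by (intro finite_PiE) auto
qed

lemma compose_in_GL:
  assumes f: "f \<in> GL p d" and g: "g \<in> GL p d" and p: "0 < p"
  shows "compose (vecs p d) f g \<in> GL p d"
proof -
  have "endo p d (compose (vecs p d) f g)"
    unfolding linear_on_def
  proof (intro conjI ballI allI impI)
    show "compose (vecs p d) f g \<in> vecs p d \<rightarrow> vecs p d"
      using f g by (auto simp: compose_def GL_in_vecs)
    fix v w assume "v \<in> vecs p d" "w \<in> vecs p d"
    thus "compose (vecs p d) f g (vadd p v w) = vadd p (compose (vecs p d) f g v) (compose (vecs p d) f g w)"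
      using f g p by (simp add: compose_def vadd_in_vecs endo_vadd[OF GL_endo] GL_in_vecs)
  next
    fix c v assume "c < p" "v \<in> vecs p d"
    thus "compose (vecs p d) f g (vsmul p c v) = vsmul p c (compose (vecs p d) f g v)"
      using f g p by (simp add: compose_def vsmul_in_vecs endo_vsmul[OF GL_endo] GL_in_vecs)
  qed
  moreover have "bij_betw (compose (vecs p d) f g) (vecs p d) (vecs p d)"
    using bij_betw_trans[OF GL_bij[OF g] GL_bij[OF f]]
    by (rule bij_betw_cong[THEN iffD1, rotated]) (simp add: compose_def)
  ultimately show ?thesis by (simp add: GL_def compose_extensional)
qed

lemma id_in_GL: "0 < p \<Longrightarrow> restrict id (vecs p d) \<in> GL p d"
  unfolding GL_def linear_on_def
  by (auto simp: vadd_in_vecs vsmul_in_vecs bij_betw_def inj_on_def)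

lemma GLgrp_simps:
  "carrier (GLgrp p d) = GL p d"
  "x \<otimes>\<^bsub>GLgrp p d\<^esub> y = compose (vecs p d) x y"
  "\<one>\<^bsub>GLgrp p d\<^esub> = restrict id (vecs p d)"
  by (simp_all add: GLgrp_def)

lemma inverse_in_GL:
  assumes p: "0 < p" and f: "f \<in> GL p d"
  shows "restrict (inv_into (vecs p d) f) (vecs p d) \<in> GL p d"
proof -
  define V where "V = vecs p d"
  define g where "g = restrict (inv_into V f) V"
  have bij_f: "bij_betw f V V" using GL_bij[OF f] by (simp add: V_def)
  have bij_g: "bij_betw g V V"
    unfolding g_def using bij_betw_inv_into[OF bij_f] bij_betw_cong[of V "restrict (inv_into V f) V" "inv_into V f"]
    by simp
  have gf: "g (f v) = v" if "v \<in> V" for v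
    unfolding g_def using bij_f that by (simp add: bij_betw_def bij_betw_apply[OF bij_f] inv_into_f_f)
  have fg: "f (g v) = v" if "v \<in> V" for v
    unfolding g_def using bij_f that by (simp add: bij_betw_def f_inv_into_f)
  have g_in: "g v \<in> V" if "v \<in> V" for v using bij_g that bij_betwE by blast
  have f_lin: "linear_on p V V f" using GL_endo[OF f] by (simp add: V_def)
  have "linear_on p V V g"
    unfolding linear_on_def
  proof (intro conjI ballI allI impI)
    show "g \<in> V \<rightarrow> V" using g_in by auto
    fix v w assume v: "v \<in> V" and w: "w \<in> V"
    have "f (vadd p (g v) (g w)) = vadd p v w"
      using f_lin g_in v w fg unfolding linear_on_def by simp
    thus "g (vadd p v w) = vadd p (g v) (g w)"
      using gf vadd_in_vecs g_in v w p V_def by metis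
  next
    fix c v assume c: "c < p" and v: "v \<in> V"
    have "f (vsmul p c (g v)) = vsmul p c v"
      using f_lin g_in v fg c unfolding linear_on_def by simp
    thus "g (vsmul p c v) = vsmul p c (g v)"
      using gf vsmul_in_vecs g_in v p V_def by metis
  qed
  thus ?thesis using bij_g unfolding GL_def V_def g_def by simp
qed

lemma group_GLgrp:
  assumes p: "0 < p"
  shows "group (GLgrp p d)"
proof (rule groupI)
  fix x y assume "x \<in> carrier (GLgrp p d)" "y \<in> carrier (GLgrp p d)"
  thus "x \<otimes>\<^bsub>GLgrp p d\<^esub> y \<in> carrier (GLgrp p d)"
    using p by (simp add: GLgrp_simps compose_in_GL)
next
  show "\<one>\<^bsub>GLgrp p d\<^esub> \<in> carrier (GLgrp p d)" using p by (simp add: GLgrp_simps id_in_GL)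
next
  fix x y z assume "x \<in> carrier (GLgrp p d)" "y \<in> carrier (GLgrp p d)" "z \<in> carrier (GLgrp p d)"
  thus "x \<otimes>\<^bsub>GLgrp p d\<^esub> y \<otimes>\<^bsub>GLgrp p d\<^esub> z = x \<otimes>\<^bsub>GLgrp p d\<^esub> (y \<otimes>\<^bsub>GLgrp p d\<^esub> z)"
    by (simp add: GLgrp_simps compose_def fun_eq_iff GL_in_vecs)
next
  fix x assume "x \<in> carrier (GLgrp p d)"
  hence x: "x \<in> GL p d" by (simp add: GLgrp_simps)
  have "x \<in> extensional (vecs p d)" using x by (simp add: GL_def)
  thus "\<one>\<^bsub>GLgrp p d\<^esub> \<otimes>\<^bsub>GLgrp p d\<^esub> x = x"
    using GL_in_vecs[OF x] by (auto simp: GLgrp_simps compose_def fun_eq_iff extensional_def)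
  have "bij_betw x (vecs p d) (vecs p d)" using GL_bij[OF x] .
  hence "restrict (inv_into (vecs p d) x) (vecs p d) \<otimes>\<^bsub>GLgrp p d\<^esub> x = \<one>\<^bsub>GLgrp p d\<^esub>"
    by (auto simp: GLgrp_simps compose_def fun_eq_iff bij_betw_def bij_betw_apply)
  thus "\<exists>y\<in>carrier (GLgrp p d). y \<otimes>\<^bsub>GLgrp p d\<^esub> x = \<one>\<^bsub>GLgrp p d\<^esub>"
    using inverse_in_GL[OF p x] by (auto simp: GLgrp_simps)
qed

lemma GLgrp_pow_apply:
  assumes u: "u \<in> GL p d" and v: "v \<in> vecs p d"
  shows "(u [^]\<^bsub>GLgrp p d\<^esub> n) v = (u ^^ n) v"
  using v
proof (induction n arbitrary: v)
  case 0 thus ?case by (simp add: GLgrp_simps)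
next
  case (Suc n)
  have "(u [^]\<^bsub>GLgrp p d\<^esub> Suc n) v = (u [^]\<^bsub>GLgrp p d\<^esub> n) (u v)"
    using Suc.prems by (simp add: compose_eq GLgrp_simps)
  also have "\<dots> = (u ^^ n) (u v)" using Suc.IH GL_in_vecs[OF u Suc.prems] by blast
  finally show ?case by (metis comp_apply funpow_Suc_right)
qed

lemma GLgrp_pow_commute:
  assumes u: "u \<in> GL p d" and v: "v \<in> vecs p d"
  shows "(u [^]\<^bsub>GLgrp p d\<^esub> (n::nat)) (u v) = u ((u [^]\<^bsub>GLgrp p d\<^esub> n) v)"
  by (simp only: GLgrp_pow_apply[OF u v] GLgrp_pow_apply[OF u GL_in_vecs[OF u v]] funpow_swap1)

lemma GLgrp_inv_apply:
  assumes p: "0 < p" and g: "g \<in> GL p d" and v: "v \<in> vecs p d"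
  shows "(inv\<^bsub>GLgrp p d\<^esub> g) (g v) = v"
proof -
  interpret G: group "GLgrp p d" using group_GLgrp[OF p] .
  have "inv\<^bsub>GLgrp p d\<^esub> g \<otimes>\<^bsub>GLgrp p d\<^esub> g = \<one>\<^bsub>GLgrp p d\<^esub>"
    using G.l_inv[of g] g by (simp add: GLgrp_simps)
  thus ?thesis using v by (metis GLgrp_simps(2,3) compose_eq id_apply restrict_apply')
qed

section \<open>Integer polynomials evaluated at an operator\<close>

definition scalar_of_int :: "nat \<Rightarrow> int \<Rightarrow> nat" where
  "scalar_of_int p a = nat (a mod int p)"

lemma scalar_of_int_less: "0 < p \<Longrightarrow> scalar_of_int p a < p"
  unfolding scalar_of_int_def by (simp add: nat_less_iff)

lemma int_scalar_of_int: "0 < p \<Longrightarrow> int (scalar_of_int p a) = a mod int p"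
  unfolding scalar_of_int_def by simp

lemma scalar_of_int_eq_0_iff: "0 < p \<Longrightarrow> scalar_of_int p a = 0 \<longleftrightarrow> int p dvd a"
  unfolding scalar_of_int_def by (auto simp: dvd_eq_mod_eq_0 nat_eq_iff2)

lemma vsmul_scalar_of_int_add:
  assumes "0 < p"
  shows "vsmul p (scalar_of_int p (a + b)) w
           = vadd p (vsmul p (scalar_of_int p a) w) (vsmul p (scalar_of_int p b) w)"
proof -
  have "int ((scalar_of_int p (a + b) * w i) mod p)
          = int (((scalar_of_int p a * w i) mod p + (scalar_of_int p b * w i) mod p) mod p)" for i
  proof -
    have "int ((scalar_of_int p (a + b) * w i) mod p) = (a * int (w i) + b * int (w i)) mod p"
      using assms by (simp add: int_scalar_of_int of_nat_mod mod_mult_left_eq distrib_right)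
    also have "\<dots> = ((a mod p * int (w i)) mod p + (b mod p * int (w i)) mod p) mod p"
      by (simp add: mod_add_eq mod_mult_left_eq)
    also have "\<dots> = int (((scalar_of_int p a * w i) mod p + (scalar_of_int p b * w i) mod p) mod p)"
      using assms by (simp add: int_scalar_of_int of_nat_mod)
    finally show ?thesis .
  qed
  thus ?thesis by (simp add: vsmul_def vadd_def fun_eq_iff)
qed

lemma vsmul_scalar_of_int_mult:
  assumes "0 < p"
  shows "vsmul p (scalar_of_int p (a * b)) w = vsmul p (scalar_of_int p a) (vsmul p (scalar_of_int p b) w)"
proof -
  have "int ((scalar_of_int p (a * b) * w i) mod p) = int ((scalar_of_int p a * scalar_of_int p b * w i) mod p)" for i
  proof -
    have "int ((scalar_of_int p (a * b) * w i) mod p) = ((a mod p) * (b mod p) * int (w i)) mod p"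
      using assms by (simp add: int_scalar_of_int of_nat_mod) (metis mod_mult_eq mod_mult_left_eq)
    also have "\<dots> = int ((scalar_of_int p a * scalar_of_int p b * w i) mod p)"
      using assms by (simp add: int_scalar_of_int of_nat_mod)
    finally show ?thesis .
  qed
  thus ?thesis by (simp add: vsmul_def fun_eq_iff mod_mult_right_eq mult.assoc)
qed

text \<open>Integer
  polynomials stand in for polynomials over \<open>\<F>\<^sub>p\<close>: their coefficients are reduced mod \<open>p\<close>.\<close>
definition poly_op :: "nat \<Rightarrow> lmap \<Rightarrow> int poly \<Rightarrow> lmap" where
  "poly_op p t P = fold_coeffs (\<lambda>a h w. vadd p (vsmul p (scalar_of_int p a) w) (t (h w))) P (\<lambda>w. vzero)"

lemma poly_op_0 [simp]: "poly_op p t 0 w = vzero"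
  by (simp add: poly_op_def)

lemma poly_op_pCons:
  assumes "endo p d t" "0 < p"
  shows "poly_op p t (pCons a P) w = vadd p (vsmul p (scalar_of_int p a) w) (t (poly_op p t P w))"
proof (cases "a = 0 \<and> P = 0")
  case True
  thus ?thesis
    using assms by (simp add: scalar_of_int_def vsmul_0_left endo_vzero vadd_vzero_left vzero_in_vecs)
qed (auto simp: poly_op_def)

lemma poly_op_in_vecs:
  assumes "endo p d t" "0 < p" "w \<in> vecs p d"
  shows "poly_op p t P w \<in> vecs p d"
  by (induction P) (use assms in \<open>auto simp: poly_op_pCons vzero_in_vecs vadd_in_vecs vsmul_in_vecs endo_in_vecs\<close>)

lemma poly_op_const:
  assumes "endo p d t" "0 < p" "w \<in> vecs p d"
  shows "poly_op p t [:c:] w = vsmul p (scalar_of_int p c) w"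
  using assms vadd_vzero_right[OF vsmul_in_vecs[OF assms(3) assms(2)] assms(2)]
  by (simp add: poly_op_pCons endo_vzero)

lemma poly_op_pCons_0:
  assumes "endo p d t" "0 < p" "w \<in> vecs p d"
  shows "poly_op p t (pCons 0 P) w = t (poly_op p t P w)"
  using assms vadd_vzero_left[OF endo_in_vecs[OF assms(1) poly_op_in_vecs[OF assms]] assms(2)]
  by (simp add: poly_op_pCons scalar_of_int_def vsmul_0_left)

lemma poly_op_add:
  assumes "endo p d t" "0 < p" "w \<in> vecs p d"
  shows "poly_op p t (P + Q) w = vadd p (poly_op p t P w) (poly_op p t Q w)"
proof (induction P arbitrary: Q)
  case 0
  thus ?case using assms vadd_vzero_left[OF poly_op_in_vecs[OF assms] assms(2)] by simp
next
  case (pCons a P)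
  obtain b Q' where Q: "Q = pCons b Q'" by (cases Q) auto
  have "poly_op p t (pCons a P + Q) w
          = vadd p (vsmul p (scalar_of_int p (a + b)) w) (t (poly_op p t (P + Q') w))"
    using assms by (simp add: Q poly_op_pCons)
  also have "\<dots> = vadd p (vadd p (vsmul p (scalar_of_int p a) w) (vsmul p (scalar_of_int p b) w))
                      (vadd p (t (poly_op p t P w)) (t (poly_op p t Q' w)))"
    using assms pCons.IH by (simp add: vsmul_scalar_of_int_add endo_vadd poly_op_in_vecs)
  also have "\<dots> = vadd p (poly_op p t (pCons a P) w) (poly_op p t Q w)"
    using assms by (simp add: Q poly_op_pCons vadd_ac)
  finally show ?case .
qed

lemma poly_op_smult:
  assumes "endo p d t" "0 < p" "w \<in> vecs p d"
  shows "poly_op p t (smult c P) w = vsmul p (scalar_of_int p c) (poly_op p t P w)"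
proof (induction P)
  case 0
  thus ?case by (simp add: vsmul_vzero)
next
  case (pCons a P)
  have "poly_op p t (smult c (pCons a P)) w
          = vadd p (vsmul p (scalar_of_int p (c * a)) w) (t (poly_op p t (smult c P) w))"
    using assms by (simp add: poly_op_pCons)
  also have "\<dots> = vadd p (vsmul p (scalar_of_int p c) (vsmul p (scalar_of_int p a) w))
                      (vsmul p (scalar_of_int p c) (t (poly_op p t P w)))"
    using assms pCons.IH by (simp add: vsmul_scalar_of_int_mult endo_vsmul scalar_of_int_less poly_op_in_vecs)
  also have "\<dots> = vsmul p (scalar_of_int p c) (poly_op p t (pCons a P) w)"
    using assms by (simp add: poly_op_pCons vsmul_vadd)
  finally show ?case .
qed

lemma poly_op_mult:
  assumes "endo p d t" "0 < p" "w \<in> vecs p d"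
  shows "poly_op p t (P * Q) w = poly_op p t P (poly_op p t Q w)"
proof (induction P)
  case (pCons a P)
  have "poly_op p t (pCons a P * Q) w
          = vadd p (vsmul p (scalar_of_int p a) (poly_op p t Q w)) (t (poly_op p t (P * Q) w))"
    using assms by (simp add: poly_op_add poly_op_smult poly_op_pCons_0 poly_op_in_vecs)
  also have "\<dots> = poly_op p t (pCons a P) (poly_op p t Q w)"
    using assms pCons.IH by (simp add: poly_op_pCons)
  finally show ?case .
qed simp

lemma endo_poly_op:
  assumes t: "endo p d t" and p: "0 < p"
  shows "endo p d (poly_op p t P)"
  unfolding linear_on_def
proof (intro conjI ballI allI impI)
  show "poly_op p t P \<in> vecs p d \<rightarrow> vecs p d" using assms poly_op_in_vecs by blast
  fix v w assume "v \<in> vecs p d" "w \<in> vecs p d"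
  thus "poly_op p t P (vadd p v w) = vadd p (poly_op p t P v) (poly_op p t P w)"
    by (induction P)
       (use assms in \<open>simp_all add: vadd_vzero_left vzero_in_vecs poly_op_pCons vadd_in_vecs vsmul_vadd
                                    endo_vadd poly_op_in_vecs vsmul_in_vecs vadd_ac\<close>)
next
  fix c v assume "c < p" "v \<in> vecs p d"
  thus "poly_op p t P (vsmul p c v) = vsmul p c (poly_op p t P v)"
    by (induction P)
       (use assms in \<open>simp_all add: vsmul_vzero poly_op_pCons vsmul_in_vecs vsmul_vadd endo_vsmul
                                    poly_op_in_vecs vsmul_commute\<close>)
qed

lemma poly_op_monom_1:
  assumes "endo p d t" "1 < p" "w \<in> vecs p d"
  shows "poly_op p t (monom 1 n) w = (t ^^ n) w"
proof (induction n)
  case 0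
  have "scalar_of_int p 1 = 1" using assms by (simp add: scalar_of_int_def)
  thus ?case using assms vsmul_1_left[OF assms(3) assms(2)] by (simp add: monom_0 poly_op_const)
next
  case (Suc n)
  have "monom (1::int) (Suc n) = pCons 0 (monom 1 n)" by (simp add: monom_Suc)
  thus ?case using assms Suc by (simp add: poly_op_pCons_0)
qed

lemma poly_op_intertwine:
  assumes t1: "endo p d t1" and t2: "endo p d t2" and p: "0 < p"
    and XX: "subspace_of p d XX"
    and t1_XX: "\<And>x. x \<in> XX \<Longrightarrow> t1 x \<in> XX"
    and \<phi>: "linear_on p XX YY \<phi>"
    and comm: "\<And>x. x \<in> XX \<Longrightarrow> \<phi> (t1 x) = t2 (\<phi> x)"
    and x: "x \<in> XX"
  shows "poly_op p t1 P x \<in> XX \<and> \<phi> (poly_op p t1 P x) = poly_op p t2 P (\<phi> x)"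
proof (induction P)
  case 0
  have "\<phi> vzero = vzero" using linear_on_vzero[OF \<phi>] XX p by (simp add: subspace_of_def)
  thus ?case using XX by (simp add: subspace_of_def)
next
  case (pCons a P)
  define y where "y = vsmul p (scalar_of_int p a) x"
  define z where "z = t1 (poly_op p t1 P x)"
  have y: "y \<in> XX" using XX x scalar_of_int_less[OF p] by (simp add: subspace_of_def y_def)
  have z: "z \<in> XX" using t1_XX pCons.IH by (simp add: z_def)
  have "poly_op p t1 (pCons a P) x = vadd p y z"
    using t1 p by (simp add: poly_op_pCons y_def z_def)
  moreover have "vadd p y z \<in> XX" using y z XX by (simp add: subspace_of_def)
  moreover have "\<phi> (vadd p y z) = vadd p (vsmul p (scalar_of_int p a) (\<phi> x)) (t2 (poly_op p t2 P (\<phi> x)))"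
    using \<phi> y z x scalar_of_int_less[OF p] comm pCons.IH unfolding linear_on_def y_def z_def by simp
  ultimately show ?case using t2 p by (simp add: poly_op_pCons)
qed

lemma poly_op_in_invariant:
  assumes t: "endo p d t" and p: "0 < p" and XX: "subspace_of p d XX"
    and t_XX: "\<And>x. x \<in> XX \<Longrightarrow> t x \<in> XX" and x: "x \<in> XX"
  shows "poly_op p t P x \<in> XX"
proof -
  have "linear_on p XX XX id" using XX by (auto simp: linear_on_def)
  thus ?thesis using poly_op_intertwine[OF t t p XX t_XX, where YY = XX and \<phi> = id] x by simp
qed

lemma poly_op_cong:
  assumes t1: "endo p d t1" and t2: "endo p d t2" and p: "0 < p"
    and eq: "\<And>x. x \<in> vecs p d \<Longrightarrow> t1 x = t2 x" and x: "x \<in> vecs p d"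
  shows "poly_op p t1 P x = poly_op p t2 P x"
proof -
  have "linear_on p (vecs p d) (vecs p d) id" by (simp add: linear_on_def)
  thus ?thesis
    using poly_op_intertwine[OF t1 t2 p subspace_of_vecs[OF p], where YY = "vecs p d" and \<phi> = id] eq x
      endo_in_vecs[OF t1] by simp
qed

lemma poly_op_intertwine_endo:
  assumes t1: "endo p d t1" and t2: "endo p d t2" and g: "endo p d g" and p: "0 < p"
    and comm: "\<forall>v\<in>vecs p d. g (t1 v) = t2 (g v)" and v: "v \<in> vecs p d"
  shows "g (poly_op p t1 P v) = poly_op p t2 P (g v)"
  using poly_op_intertwine[OF t1 t2 p subspace_of_vecs[OF p], where YY = "vecs p d" and \<phi> = g and x = v]
    endo_in_vecs[OF t1] g comm v by blast

lemma poly_op_pcompose: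
  assumes u: "endo p d u" and p: "0 < p" and w: "w \<in> vecs p d"
  shows "poly_op p u (pcompose F a) w = poly_op p (poly_op p u a) F w"
proof (induction F)
  case (pCons c F)
  have "poly_op p u (pcompose (pCons c F) a) w
          = vadd p (vsmul p (scalar_of_int p c) w) (poly_op p u a (poly_op p u (pcompose F a) w))"
    using u p w by (simp add: pcompose_pCons poly_op_add poly_op_const poly_op_mult poly_op_in_vecs)
  also have "\<dots> = poly_op p (poly_op p u a) (pCons c F) w"
    using pCons.IH by (simp add: poly_op_pCons[OF endo_poly_op[OF u p] p])
  finally show ?case .
qed simp

lemma poly_op_diff_eq_vzero_iff:
  assumes t: "endo p d t" and p: "0 < p" and w: "w \<in> vecs p d"
  shows "poly_op p t (P - Q) w = vzero \<longleftrightarrow> poly_op p t P w = poly_op p t Q w"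
proof -
  have "poly_op p t P w = vadd p (poly_op p t (P - Q) w) (poly_op p t Q w)"
    using poly_op_add[OF t p w, of "P - Q" Q] by simp
  thus ?thesis
    using vadd_eq_right_imp_vzero[OF poly_op_in_vecs[OF t p w] poly_op_in_vecs[OF t p w] p]
      vadd_vzero_left[OF poly_op_in_vecs[OF t p w] p] by metis
qed

section \<open>Counting roots of an annihilating polynomial\<close>

lemma lead_coeff_synthetic_div:
  fixes f :: "'a::comm_ring_1 poly"
  assumes "degree f \<noteq> 0"
  shows "lead_coeff (synthetic_div f c) = lead_coeff f"
proof -
  define n where "n = degree f - 1"
  define q where "q = synthetic_div f c"
  have f: "degree f = Suc n" and q: "degree q = n"
    using assms by (simp_all add: n_def q_def degree_synthetic_div)
  have "coeff (f + smult c q) (Suc n) = coeff (pCons (poly f c) q) (Suc n)"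
    using synthetic_div_correct[of f c] by (simp add: q_def)
  thus ?thesis using f q by (simp add: q_def coeff_eq_0)
qed

text \<open>Counting roots of \<open>f\<close> in the quotient \<open>R/I\<close>, knowing only that differences of distinct
  candidate roots are not zero divisors there.\<close>
lemma card_roots_modulo_le_degree:
  fixes f :: "'a::comm_ring_1 poly"
  assumes "finite S"
    and diff: "\<And>x y. x \<in> I \<Longrightarrow> y \<in> I \<Longrightarrow> x - y \<in> I"
    and cancel: "\<And>a b h. a \<in> S \<Longrightarrow> b \<in> S \<Longrightarrow> a \<noteq> b \<Longrightarrow> (b - a) * h \<in> I \<Longrightarrow> h \<in> I"
    and roots: "\<And>a. a \<in> S \<Longrightarrow> poly f a \<in> I"
    and lc: "lead_coeff f \<notin> I"
  shows "card S \<le> degree f"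
  using assms(1) cancel roots lc
proof (induction S arbitrary: f rule: finite_induct)
  case (insert a S)
  define q where "q = synthetic_div f a"
  have f_eq: "poly f b = (b - a) * poly q b + poly f a" for b
  proof -
    have "poly ([:-a, 1:] * q + [:poly f a:]) b = poly f b"
      using synthetic_div_correct'[of a f] by (simp add: q_def)
    thus ?thesis by (simp add: algebra_simps)
  qed
  have "degree f \<noteq> 0"
  proof
    assume "degree f = 0"
    hence "poly f a = lead_coeff f" by (metis degree_0_id poly_pCons poly_0 mult_zero_right add_0_right)
    thus False using insert.prems(2,3) by (metis insertI1)
  qed
  hence q: "lead_coeff q = lead_coeff f" "degree q = degree f - 1"
    unfolding q_def using lead_coeff_synthetic_div degree_synthetic_div by blast+
  have "card S \<le> degree q"
  proof (rule insert.IH)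
    fix b assume b: "b \<in> S"
    have "(b - a) * poly q b = poly f b - poly f a" using f_eq[of b] by simp
    also have "\<dots> \<in> I" using diff insert.prems(2) b by blast
    finally show "poly q b \<in> I" using insert.prems(1)[of a b] insert.hyps(2) b by blast
  qed (use insert.prems q in auto)
  thus ?case using insert.hyps q \<open>degree f \<noteq> 0\<close> by simp
qed simp

lemma exists_annihilating_poly_op:
  assumes p: "Factorial_Ring.prime p" and u: "endo p d u"
    and W: "subspace_of p d W" and uW: "\<And>w. w \<in> W \<Longrightarrow> u w \<in> W"
    and card_W: "card W = p ^ k" and w0: "w0 \<in> W"
  obtains F where "degree F \<le> k" "\<not> int p dvd lead_coeff F" "poly_op p u F w0 = vzero"
proof -
  have p0: "0 < p" using p prime_gt_0_nat by blast
  have W_vecs: "W \<subseteq> vecs p d" using W by (simp add: subspace_of_def)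
  have "finite W" using finite_vecs[OF p0] W_vecs finite_subset by blast
  define C where "C = PiE {..k} (\<lambda>_. {..<p})"
  define P where "P c = (\<Sum>i\<le>k. monom (int (c i)) i)" for c :: "nat \<Rightarrow> nat"
  have coeff_P: "coeff (P c) i = (if i \<le> k then int (c i) else 0)" for c i
    by (simp add: P_def coeff_sum coeff_monom)
  have "\<not> inj_on (\<lambda>c. poly_op p u (P c) w0) C"
  proof
    assume "inj_on (\<lambda>c. poly_op p u (P c) w0) C"
    hence "card C \<le> card W"
      using card_inj_on_le[OF _ _ \<open>finite W\<close>] poly_op_in_invariant[OF u p0 W uW w0] by blast
    moreover have "card C = p ^ Suc k" by (simp add: C_def card_PiE)
    ultimately show False using card_W prime_gt_1_nat[OF p] by simp
  qed
  then obtain c c' where cC: "c \<in> C" "c' \<in> C" and "c \<noteq> c'"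
    and eq: "poly_op p u (P c) w0 = poly_op p u (P c') w0" unfolding inj_on_def by blast
  define F where "F = P c - P c'"
  have coeff_F: "coeff F i = (if i \<le> k then int (c i) - int (c' i) else 0)" for i
    by (simp add: F_def coeff_P)
  have "degree F \<le> k" by (rule degree_le) (simp add: coeff_F)
  obtain j where j: "c j \<noteq> c' j" using \<open>c \<noteq> c'\<close> by blast
  have "j \<le> k" using j cC unfolding C_def PiE_def extensional_def by fastforce
  hence "F \<noteq> 0" using j by (auto simp: coeff_F dest: arg_cong[of _ _ "\<lambda>F. coeff F j"])
  have "\<not> int p dvd lead_coeff F"
  proof
    assume dvd: "int p dvd lead_coeff F"
    have "c (degree F) < p" "c' (degree F) < p" using cC \<open>degree F \<le> k\<close> unfolding C_def by auto
    moreover have "lead_coeff F = int (c (degree F)) - int (c' (degree F))"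
      using \<open>degree F \<le> k\<close> by (simp add: coeff_F)
    moreover have "\<bar>int p\<bar> \<le> \<bar>lead_coeff F\<bar>"
      using dvd \<open>F \<noteq> 0\<close> dvd_imp_le_int[of "lead_coeff F" "int p"] by simp
    ultimately show False by linarith
  qed
  moreover have "poly_op p u F w0 = vzero"
    unfolding F_def using eq poly_op_diff_eq_vzero_iff[OF u p0] w0 W_vecs by blast
  ultimately show ?thesis using \<open>degree F \<le> k\<close> that by blast
qed

lemma poly_op_const_neq_vzero:
  assumes p: "Factorial_Ring.prime p" and u: "endo p d u"
    and w: "w \<in> vecs p d" "w \<noteq> vzero" and c: "\<not> int p dvd c"
  shows "poly_op p u [:c:] w \<noteq> vzero"
proof -
  have p0: "0 < p" using prime_gt_0_nat[OF p] .
  have "vsmul p (scalar_of_int p c) w \<noteq> vzero"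
    using vsmul_eq_vzero_imp[OF p w scalar_of_int_less[OF p0]] c scalar_of_int_eq_0_iff[OF p0] by blast
  thus ?thesis using poly_op_const[OF u p0 w(1)] by simp
qed

lemma poly_op_pcompose_monom:
  assumes u: "endo p d u" and p: "1 < p" and w: "w \<in> vecs p d"
  shows "poly_op p u (pcompose F (monom 1 j)) w = poly_op p (u ^^ j) F w"
proof -
  have p0: "0 < p" using p by simp
  have "poly_op p u (pcompose F (monom 1 j)) w = poly_op p (poly_op p u (monom 1 j)) F w"
    using poly_op_pcompose[OF u p0 w] .
  also have "\<dots> = poly_op p (u ^^ j) F w"
    using poly_op_cong[OF endo_poly_op[OF u p0] endo_funpow[OF u] p0 _ w] poly_op_monom_1[OF u p] by blast
  finally show ?thesis .
qed

text \<open>Read in the quotient of \<open>\<int>[X]\<close> by the annihilator \<open>I\<close> of \<open>W\<close>, the monomials \<open>X\<^sup>j\<close> with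
  \<open>j \<in> N\<close> are roots of \<open>F\<close> whose pairwise differences are not zero divisors.\<close>
lemma card_le_degree_if_poly_op_roots:
  fixes F :: "int poly" and N :: "nat set"
  assumes p: "Factorial_Ring.prime p" and u: "endo p d u"
    and W: "subspace_of p d W" and uW: "\<And>w. w \<in> W \<Longrightarrow> u w \<in> W"
    and w0: "w0 \<in> W" "w0 \<noteq> vzero"
    and lc: "\<not> int p dvd lead_coeff F"
    and roots: "\<And>j w. j \<in> N \<Longrightarrow> w \<in> W \<Longrightarrow> poly_op p (u ^^ j) F w = vzero"
    and separate: "\<And>i j w. i \<in> N \<Longrightarrow> j \<in> N \<Longrightarrow> i \<noteq> j \<Longrightarrow> w \<in> W \<Longrightarrow> (u ^^ i) w = (u ^^ j) w
                     \<Longrightarrow> w = vzero"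
    and "finite N"
  shows "card N \<le> degree F"
proof -
  have p1: "1 < p" using prime_gt_1_nat[OF p] .
  hence p0: "0 < p" by simp
  have W_vecs: "W \<subseteq> vecs p d" using W by (simp add: subspace_of_def)
  define I where "I = {P. \<forall>w\<in>W. poly_op p u P w = vzero}"
  define S where "S = (\<lambda>j. monom (1::int) j) ` N"
  have "card S \<le> degree (map_poly (\<lambda>c. [:c:]) F)"
  proof (rule card_roots_modulo_le_degree[where I = I])
    show "finite S" using \<open>finite N\<close> by (simp add: S_def)
  next
    fix P Q assume "P \<in> I" "Q \<in> I"
    thus "P - Q \<in> I" using poly_op_diff_eq_vzero_iff[OF u p0] W_vecs by (auto simp: I_def)
  next
    fix a b h assume "a \<in> S" "b \<in> S" "a \<noteq> b" and h: "(b - a) * h \<in> I"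
    then obtain i j where ij: "i \<in> N" "j \<in> N" "i \<noteq> j" "a = monom 1 i" "b = monom 1 j"
      by (auto simp: S_def)
    show "h \<in> I" unfolding I_def mem_Collect_eq
    proof
      fix w assume w: "w \<in> W"
      define z where "z = poly_op p u h w"
      have z: "z \<in> W" unfolding z_def using poly_op_in_invariant[OF u p0 W uW w] .
      have "poly_op p u (b - a) z = vzero"
        using h w W_vecs poly_op_mult[OF u p0, of w "b - a" h] by (auto simp: I_def z_def)
      hence "(u ^^ j) z = (u ^^ i) z"
        using poly_op_diff_eq_vzero_iff[OF u p0] poly_op_monom_1[OF u p1] z W_vecs ij by auto
      thus "poly_op p u h w = vzero" using separate[OF ij(2,1)] ij(3) z by (simp add: z_def)
    qed
  next
    fix a assume "a \<in> S"
    then obtain j where "j \<in> N" "a = monom 1 j" by (auto simp: S_def)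
    thus "poly (map_poly (\<lambda>c. [:c:]) F) a \<in> I"
      using roots poly_op_pcompose_monom[OF u p1] W_vecs by (auto simp: I_def pcompose_altdef[symmetric])
  next
    have "lead_coeff F \<noteq> 0" using lc by auto
    hence "lead_coeff (map_poly (\<lambda>c. [:c:]) F) = [:lead_coeff F:]"
      by (simp add: lead_coeff_map_poly_nz)
    thus "lead_coeff (map_poly (\<lambda>c. [:c:]) F) \<notin> I"
      using poly_op_const_neq_vzero[OF p u _ w0(2) lc] w0(1) W_vecs by (auto simp: I_def)
  qed
  moreover have "card S = card N"
    unfolding S_def by (rule card_image) (auto simp: inj_on_def monom_eq_iff')
  ultimately show ?thesis by (simp add: degree_map_poly)
qed

section \<open>Annihilators on a homogeneous module\<close>

lemma vsum_empty: "vsum p {} w = vzero"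
  by (simp add: vsum_def vzero_def)

lemma vsum_insert: "finite I \<Longrightarrow> i \<notin> I \<Longrightarrow> vsum p (insert i I) w = vadd p (w i) (vsum p I w)"
  by (simp add: vsum_def vadd_def fun_eq_iff mod_add_right_eq)

lemma vsum_cong: "(\<And>i. i \<in> I \<Longrightarrow> w i = w' i) \<Longrightarrow> vsum p I w = vsum p I w'"
  unfolding vsum_def by (intro ext arg_cong[where f = "\<lambda>x. x mod p"] sum.cong) auto

lemma vsum_vzero: "vsum p I (\<lambda>i. vzero) = vzero"
  by (simp add: vsum_def vzero_def)

lemma vsum_in_vecs: "0 < p \<Longrightarrow> (\<And>i. i \<in> I \<Longrightarrow> w i \<in> vecs p d) \<Longrightarrow> vsum p I w \<in> vecs p d"
  unfolding vsum_def vecs_def by auto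

lemma endo_vsum:
  assumes L: "endo p d L" and p: "0 < p" and "finite I"
    and w: "\<And>i. i \<in> I \<Longrightarrow> w i \<in> vecs p d"
  shows "L (vsum p I w) = vsum p I (\<lambda>i. L (w i))"
  using assms(3) w
proof (induction I rule: finite_induct)
  case empty
  thus ?case using endo_vzero[OF L p] by (simp add: vsum_empty)
next
  case (insert i I)
  have "L (vsum p (insert i I) w) = L (vadd p (w i) (vsum p I w))"
    using insert by (simp add: vsum_insert)
  also have "\<dots> = vadd p (L (w i)) (L (vsum p I w))"
    by (rule endo_vadd[OF L]) (use insert.prems vsum_in_vecs[OF p, of I w d] in auto)
  also have "\<dots> = vsum p (insert i I) (\<lambda>i. L (w i))"
    using insert by (simp add: vsum_insert)
  finally show ?case .
qed

lemma endo_vanishes_on_direct_sum: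
  assumes L: "endo p d L" and p: "0 < p" and "finite I"
    and decomp: "bij_betw (vsum p I) (Pi\<^sub>E I Ws) (vecs p d)"
    and Ws: "\<And>i. i \<in> I \<Longrightarrow> Ws i \<subseteq> vecs p d"
    and vanish: "\<And>i w. i \<in> I \<Longrightarrow> w \<in> Ws i \<Longrightarrow> L w = vzero"
    and v: "v \<in> vecs p d"
  shows "L v = vzero"
proof -
  obtain ws where ws: "ws \<in> Pi\<^sub>E I Ws" and v_eq: "v = vsum p I ws"
    using decomp v by (metis bij_betw_iff_bijections)
  have "L v = vsum p I (\<lambda>i. L (ws i))"
    using endo_vsum[OF L p \<open>finite I\<close>] ws Ws v_eq by (auto simp: PiE_def Pi_def)
  also have "\<dots> = vsum p I (\<lambda>i. vzero)"
    using vanish ws by (intro vsum_cong) (auto simp: PiE_def Pi_def)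
  finally show ?thesis by (simp add: vsum_vzero)
qed

lemma endo_injective_on_direct_sum:
  assumes L: "endo p d L" and p: "0 < p" and "finite I"
    and decomp: "bij_betw (vsum p I) (Pi\<^sub>E I Ws) (vecs p d)"
    and Ws: "\<And>i. i \<in> I \<Longrightarrow> subspace_of p d (Ws i)"
    and L_Ws: "\<And>i w. i \<in> I \<Longrightarrow> w \<in> Ws i \<Longrightarrow> L w \<in> Ws i"
    and injective: "\<And>i w. i \<in> I \<Longrightarrow> w \<in> Ws i \<Longrightarrow> L w = vzero \<Longrightarrow> w = vzero"
    and v: "v \<in> vecs p d" and Lv: "L v = vzero"
  shows "v = vzero"
proof -
  obtain ws where ws: "ws \<in> Pi\<^sub>E I Ws" and v_eq: "v = vsum p I ws"
    using decomp v by (metis bij_betw_iff_bijections)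
  have ws_vecs: "ws i \<in> vecs p d" if "i \<in> I" for i
    using Ws[OF that] ws that by (auto simp: subspace_of_def PiE_def Pi_def)
  have "vsum p I (restrict (\<lambda>i. L (ws i)) I) = vsum p I (\<lambda>i. L (ws i))"
    by (rule vsum_cong) simp
  also have "\<dots> = vzero"
    using endo_vsum[OF L p \<open>finite I\<close> ws_vecs] v_eq Lv by simp
  also have "\<dots> = vsum p I (restrict (\<lambda>i. vzero) I)"
    by (metis (no_types, lifting) restrict_apply vsum_cong vsum_vzero)
  finally have sums_eq: "vsum p I (restrict (\<lambda>i. L (ws i)) I) = vsum p I (restrict (\<lambda>i. vzero) I)" .
  have "restrict (\<lambda>i. L (ws i)) I \<in> Pi\<^sub>E I Ws" using ws L_Ws by (auto simp: PiE_def Pi_def)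
  moreover have "restrict (\<lambda>i. vzero) I \<in> Pi\<^sub>E I Ws" using Ws by (auto simp: subspace_of_def)
  ultimately have "restrict (\<lambda>i. L (ws i)) I = restrict (\<lambda>i. vzero) I"
    using decomp sums_eq unfolding bij_betw_def inj_on_def by blast
  hence "ws i = vzero" if "i \<in> I" for i
    using injective ws that by (auto simp: fun_eq_iff PiE_def Pi_def split: if_splits)
  thus ?thesis using v_eq by (metis vsum_cong vsum_vzero)
qed

lemma poly_op_kernel_in_irr_submodule:
  assumes u: "endo p d u" and p: "0 < p"
    and U_endo: "\<forall>g\<in>U. endo p d g"
    and U_comm: "\<forall>g\<in>U. \<forall>v\<in>vecs p d. g (u v) = u (g v)"
    and M: "irr_submodule p d U M"
  shows "(\<forall>x\<in>M. poly_op p u F x = vzero) \<or> (\<forall>x\<in>M. poly_op p u F x = vzero \<longrightarrow> x = vzero)"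
proof -
  have M_sub: "subspace_of p d M" and M_inv: "invariant U M"
    using M by (simp_all add: irr_submodule_def)
  have M_vecs: "M \<subseteq> vecs p d" using M_sub by (simp add: subspace_of_def)
  define K where "K = {x \<in> M. poly_op p u F x = vzero}"
  have "subspace_of p d K" unfolding K_def by (rule subspace_of_kernel[OF endo_poly_op[OF u p] p M_sub])
  moreover have "invariant U K"
    unfolding invariant_def
  proof (rule ballI)
    fix g assume g: "g \<in> U"
    have g_endo: "endo p d g" using U_endo g by blast
    have g_comm: "\<forall>v\<in>vecs p d. g (u v) = u (g v)" using bspec[OF U_comm g] .
    show "\<forall>x\<in>K. g x \<in> K"
    proof
      fix x assume x: "x \<in> K"
      have x_M: "x \<in> M" and x_vecs: "x \<in> vecs p d" using x M_vecs by (auto simp: K_def)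
      have "poly_op p u F (g x) = g (poly_op p u F x)"
        using poly_op_intertwine_endo[OF u u g_endo p g_comm x_vecs] by simp
      also have "\<dots> = vzero" using x endo_vzero[OF g_endo p] by (simp add: K_def)
      finally show "g x \<in> K" using M_inv g x_M by (simp add: K_def invariant_def)
    qed
  qed
  moreover have "K \<subseteq> M" by (auto simp: K_def)
  ultimately have "K = {vzero} \<or> K = M"
    using M unfolding irr_submodule_def by (meson \<open>K \<subseteq> M\<close>)
  thus ?thesis unfolding K_def by blast
qed

lemma poly_op_vanishes_iso_submodules:
  assumes u: "endo p d u" and p: "0 < p" and uU: "u \<in> U"
    and M: "irr_submodule p d U M"
    and iso: "iso_submodules p U M M'"
    and vanish: "\<forall>x\<in>M. poly_op p u F x = vzero"
  shows "\<forall>y\<in>M'. poly_op p u F y = vzero"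
proof
  fix y assume y: "y \<in> M'"
  have M_sub: "subspace_of p d M" using M by (simp add: irr_submodule_def)
  have uM: "u x \<in> M" if "x \<in> M" for x using M uU that by (simp add: irr_submodule_def invariant_def)
  obtain \<phi> where bij: "bij_betw \<phi> M M'" and lin: "linear_on p M M' \<phi>"
    and comm: "\<forall>g\<in>U. \<forall>x\<in>M. \<phi> (g x) = g (\<phi> x)"
    using iso unfolding iso_submodules_def by blast
  obtain x where x: "x \<in> M" and y_eq: "y = \<phi> x" using bij y by (metis bij_betw_iff_bijections)
  have "\<phi> (u x) = u (\<phi> x)" if "x \<in> M" for x using comm uU that by blast
  hence "\<phi> (poly_op p u F x) = poly_op p u F y"
    using poly_op_intertwine[OF u u p M_sub uM lin _ x] y_eq by blast
  moreover have "\<phi> vzero = vzero" using linear_on_vzero[OF lin] M_sub p by (simp add: subspace_of_def)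
  ultimately show "poly_op p u F y = vzero" using vanish x by simp
qed

lemma poly_op_vanishes_if_homogeneous:
  assumes u: "endo p d u" and p: "0 < p" and uU: "u \<in> U"
    and U_endo: "\<forall>g\<in>U. endo p d g"
    and U_comm: "\<forall>g\<in>U. \<forall>v\<in>vecs p d. g (u v) = u (g v)"
    and hom: "homogeneous p d U"
    and w0: "w0 \<in> vecs p d" "w0 \<noteq> vzero" and F_w0: "poly_op p u F w0 = vzero"
    and v: "v \<in> vecs p d"
  shows "poly_op p u F v = vzero"
proof -
  obtain I :: "nat set" and Ws where "finite I"
    and irr: "\<And>i. i \<in> I \<Longrightarrow> irr_submodule p d U (Ws i)"
    and iso: "\<And>i j. i \<in> I \<Longrightarrow> j \<in> I \<Longrightarrow> iso_submodules p U (Ws i) (Ws j)"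
    and decomp: "bij_betw (vsum p I) (Pi\<^sub>E I Ws) (vecs p d)"
    using hom unfolding homogeneous_def by blast
  have Ws: "subspace_of p d (Ws i)" if "i \<in> I" for i
    using irr[OF that] by (simp add: irr_submodule_def)
  have kernel: "(\<forall>x\<in>Ws i. poly_op p u F x = vzero) \<or> (\<forall>x\<in>Ws i. poly_op p u F x = vzero \<longrightarrow> x = vzero)"
    if "i \<in> I" for i
    using poly_op_kernel_in_irr_submodule[OF u p U_endo U_comm irr[OF that]] .
  show ?thesis
  proof (cases "\<exists>i\<in>I. \<forall>x\<in>Ws i. poly_op p u F x = vzero")
    case True
    then obtain i where "i \<in> I" "\<forall>x\<in>Ws i. poly_op p u F x = vzero" by blast
    hence "\<forall>x\<in>Ws j. poly_op p u F x = vzero" if "j \<in> I" for j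
      using poly_op_vanishes_iso_submodules[OF u p uU irr iso] that by blast
    thus ?thesis
      using endo_vanishes_on_direct_sum[OF endo_poly_op[OF u p] p \<open>finite I\<close> decomp _ _ v] Ws
      by (auto simp: subspace_of_def)
  next
    case False
    have "w0 = vzero"
    proof (rule endo_injective_on_direct_sum[OF endo_poly_op[OF u p] p \<open>finite I\<close> decomp Ws])
      fix i x assume i: "i \<in> I" and x: "x \<in> Ws i"
      have "u y \<in> Ws i" if "y \<in> Ws i" for y
        using irr[OF i] uU that by (simp add: irr_submodule_def invariant_def)
      thus "poly_op p u F x \<in> Ws i" using poly_op_in_invariant[OF u p Ws[OF i] _ x] by blast
      show "poly_op p u F x = vzero \<Longrightarrow> x = vzero" using kernel[OF i] False i x by blast
    qed (use w0 F_w0 in auto)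
    thus ?thesis using w0(2) by blast
  qed
qed

section \<open>The conjugacy class of a generator of \<open>U\<close>\<close>

lemma poly_op_vanishes_conjugate:
  assumes p: "0 < p" and u: "u \<in> GL p d" and g: "g \<in> GL p d"
    and vanish: "\<forall>v\<in>vecs p d. poly_op p u F v = vzero" and w: "w \<in> vecs p d"
  shows "poly_op p (g \<otimes>\<^bsub>GLgrp p d\<^esub> u \<otimes>\<^bsub>GLgrp p d\<^esub> inv\<^bsub>GLgrp p d\<^esub> g) F w = vzero"
proof -
  interpret G: group "GLgrp p d" using group_GLgrp[OF p] .
  define y where "y = g \<otimes>\<^bsub>GLgrp p d\<^esub> u \<otimes>\<^bsub>GLgrp p d\<^esub> inv\<^bsub>GLgrp p d\<^esub> g"
  have y: "y \<in> GL p d" using u g by (simp add: y_def GLgrp_simps[symmetric])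
  have comm: "\<forall>v\<in>vecs p d. g (u v) = y (g v)"
    using u g GLgrp_inv_apply[OF p g] GL_in_vecs[OF g] GL_in_vecs[OF u]
    by (simp add: y_def compose_eq GLgrp_simps)
  obtain v where v: "v \<in> vecs p d" and w_eq: "w = g v"
    using GL_bij[OF g] w by (metis bij_betw_iff_bijections)
  have "poly_op p y F w = g (poly_op p u F v)"
    using poly_op_intertwine_endo[OF GL_endo[OF u] GL_endo[OF y] GL_endo[OF g] p comm v] w_eq by simp
  also have "\<dots> = vzero" using vanish v endo_vzero[OF GL_endo[OF g] p] by simp
  finally show ?thesis by (simp add: y_def)
qed

lemma fixed_point_free_separates:
  assumes p: "0 < p" and U: "subgroup U (GLgrp p d)"
    and fpf: "\<forall>x\<in>U. x \<noteq> \<one>\<^bsub>GLgrp p d\<^esub> \<longrightarrow> (\<forall>w\<in>W. w \<noteq> vzero \<longrightarrow> x w \<noteq> w)"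
    and W_vecs: "W \<subseteq> vecs p d"
    and y: "y \<in> U" "y' \<in> U" "y \<noteq> y'" and w: "w \<in> W" and eq: "y w = y' w"
  shows "w = vzero"
proof (rule ccontr)
  assume "w \<noteq> vzero"
  interpret G: group "GLgrp p d" using group_GLgrp[OF p] .
  define x where "x = inv\<^bsub>GLgrp p d\<^esub> y \<otimes>\<^bsub>GLgrp p d\<^esub> y'"
  have y_G: "y \<in> carrier (GLgrp p d)" "y' \<in> carrier (GLgrp p d)"
    using y U subgroup.subset by blast+
  have "x \<in> U" unfolding x_def using U y by (simp add: subgroup.m_closed subgroup.m_inv_closed)
  moreover have "x \<noteq> \<one>\<^bsub>GLgrp p d\<^esub>"
  proof
    assume "x = \<one>\<^bsub>GLgrp p d\<^esub>"
    hence "y \<otimes>\<^bsub>GLgrp p d\<^esub> (inv\<^bsub>GLgrp p d\<^esub> y \<otimes>\<^bsub>GLgrp p d\<^esub> y') = y \<otimes>\<^bsub>GLgrp p d\<^esub> \<one>\<^bsub>GLgrp p d\<^esub>"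
      by (simp add: x_def)
    hence "y' = y" using y_G by (simp add: G.m_assoc[symmetric])
    thus False using y(3) by simp
  qed
  moreover have "x w = w"
  proof -
    have "w \<in> vecs p d" using w W_vecs by blast
    hence "x w = (inv\<^bsub>GLgrp p d\<^esub> y) (y w)" using eq by (simp add: x_def GLgrp_simps compose_eq)
    thus ?thesis using GLgrp_inv_apply[OF p _ \<open>w \<in> vecs p d\<close>] y_G by (simp add: GLgrp_simps)
  qed
  ultimately show False using fpf w \<open>w \<noteq> vzero\<close> by blast
qed

lemma exists_poly_op_vanishing:
  assumes p: "Factorial_Ring.prime p"
    and U: "subgroup U (GLgrp p d)" and uU: "u \<in> U"
    and U_pow: "\<And>x. x \<in> U \<Longrightarrow> \<exists>n::nat. x = u [^]\<^bsub>GLgrp p d\<^esub> n"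
    and hom: "homogeneous p d U"
    and W: "irr_submodule p d U W" and card_W: "card W = p ^ k"
  obtains F where "degree F \<le> k" "\<not> int p dvd lead_coeff F" "\<forall>v\<in>vecs p d. poly_op p u F v = vzero"
proof -
  have p0: "0 < p" using prime_gt_0_nat[OF p] .
  have U_GL: "U \<subseteq> GL p d" using subgroup.subset[OF U] by (simp add: GLgrp_simps)
  have u: "u \<in> GL p d" using uU U_GL by blast
  have W_sub: "subspace_of p d W" and W_vecs: "W \<subseteq> vecs p d"
    and uW: "\<And>w. w \<in> W \<Longrightarrow> u w \<in> W"
    using W uU by (auto simp: irr_submodule_def subspace_of_def invariant_def)
  obtain w0 where w0: "w0 \<in> W" "w0 \<noteq> vzero"
    using W by (auto simp: irr_submodule_def subspace_of_def)
  obtain F where "degree F \<le> k" "\<not> int p dvd lead_coeff F" and F_w0: "poly_op p u F w0 = vzero"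
    using exists_annihilating_poly_op[OF p GL_endo[OF u] W_sub uW card_W w0(1)] by blast
  moreover have U_endo: "\<forall>g\<in>U. endo p d g" using U_GL GL_endo by blast
  have U_comm: "\<forall>g\<in>U. \<forall>v\<in>vecs p d. g (u v) = u (g v)"
  proof
    fix g assume "g \<in> U"
    then obtain n :: nat where "g = u [^]\<^bsub>GLgrp p d\<^esub> n" using U_pow by blast
    thus "\<forall>v\<in>vecs p d. g (u v) = u (g v)" using GLgrp_pow_commute[OF u] by simp
  qed
  hence "\<forall>v\<in>vecs p d. poly_op p u F v = vzero"
    using poly_op_vanishes_if_homogeneous[OF GL_endo[OF u] p0 uU U_endo _ hom _ w0(2) F_w0]
      w0(1) W_vecs by blast
  ultimately show ?thesis using that by blast
qed

lemma card_poly_op_roots_in_cyclic_le_degree: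
  assumes p: "Factorial_Ring.prime p"
    and U: "subgroup U (GLgrp p d)" and uU: "u \<in> U"
    and U_pow: "\<And>x. x \<in> U \<Longrightarrow> \<exists>n::nat. x = u [^]\<^bsub>GLgrp p d\<^esub> n"
    and W: "irr_submodule p d U W"
    and fpf: "\<forall>x\<in>U. x \<noteq> \<one>\<^bsub>GLgrp p d\<^esub> \<longrightarrow> (\<forall>w\<in>W. w \<noteq> vzero \<longrightarrow> x w \<noteq> w)"
    and lc: "\<not> int p dvd lead_coeff F"
    and Y: "Y \<subseteq> U" and roots: "\<forall>y\<in>Y. \<forall>v\<in>vecs p d. poly_op p y F v = vzero"
  shows "card Y \<le> degree F"
proof -
  have p0: "0 < p" using prime_gt_0_nat[OF p] .
  have U_GL: "U \<subseteq> GL p d" using subgroup.subset[OF U] by (simp add: GLgrp_simps)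
  have u: "u \<in> GL p d" using uU U_GL by blast
  have W_sub: "subspace_of p d W" and W_vecs: "W \<subseteq> vecs p d"
    and uW: "\<And>w. w \<in> W \<Longrightarrow> u w \<in> W"
    using W uU by (auto simp: irr_submodule_def subspace_of_def invariant_def)
  obtain w0 where w0: "w0 \<in> W" "w0 \<noteq> vzero"
    using W by (auto simp: irr_submodule_def subspace_of_def)
  obtain n where n: "\<forall>y\<in>U. y = u [^]\<^bsub>GLgrp p d\<^esub> (n y :: nat)"
    using U_pow by metis
  have y_apply: "y v = (u ^^ n y) v" if "y \<in> Y" "v \<in> vecs p d" for y v
  proof -
    have "y = u [^]\<^bsub>GLgrp p d\<^esub> n y" using bspec[OF n] that(1) Y by blast
    hence "y v = (u [^]\<^bsub>GLgrp p d\<^esub> n y) v" by (rule fun_cong)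
    also have "\<dots> = (u ^^ n y) v" by (rule GLgrp_pow_apply[OF u that(2)])
    finally show ?thesis .
  qed
  have "inj_on n Y"
  proof (rule inj_onI)
    fix y y' assume "y \<in> Y" "y' \<in> Y" "n y = n y'"
    thus "y = y'" using bspec[OF n] Y by (metis subsetD)
  qed
  hence "card Y = card (n ` Y)" by (simp add: card_image)
  also have "\<dots> \<le> degree F"
  proof (rule card_le_degree_if_poly_op_roots[OF p GL_endo[OF u] W_sub uW w0 lc])
    fix j w assume "j \<in> n ` Y" "w \<in> W"
    then obtain y where y: "y \<in> Y" "j = n y" and w: "w \<in> vecs p d" using W_vecs by blast
    have "y \<in> GL p d" using y Y U_GL by blast
    have "poly_op p (u ^^ j) F w = poly_op p y F w"
      by (rule poly_op_cong[OF endo_funpow[OF GL_endo[OF u]] GL_endo[OF \<open>y \<in> GL p d\<close>] p0 _ w])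
         (simp add: y_apply[OF y(1)] y(2))
    thus "poly_op p (u ^^ j) F w = vzero" using roots y w by simp
  next
    fix i j w assume "i \<in> n ` Y" "j \<in> n ` Y" "i \<noteq> j" "w \<in> W" and eq: "(u ^^ i) w = (u ^^ j) w"
    then obtain y y' where y: "y \<in> Y" "i = n y" and y': "y' \<in> Y" "j = n y'" by blast
    have "w \<in> vecs p d" using \<open>w \<in> W\<close> W_vecs by blast
    hence "y w = y' w" using eq y_apply y y' by simp
    moreover have "y \<noteq> y'" using \<open>i \<noteq> j\<close> y y' by blast
    ultimately show "w = vzero"
      using fixed_point_free_separates[OF p0 U fpf W_vecs] y(1) y'(1) Y \<open>w \<in> W\<close> by blast
  next
    show "finite (n ` Y)" using finite_subset[OF subset_trans[OF Y U_GL] finite_GL[OF p0]] by simp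
  qed
  finally show ?thesis .
qed

lemma card_conjugates_le:
  assumes p: "Factorial_Ring.prime p"
    and U: "subgroup U (GLgrp p d)" and uU: "u \<in> U"
    and U_pow: "\<And>x. x \<in> U \<Longrightarrow> \<exists>n::nat. x = u [^]\<^bsub>GLgrp p d\<^esub> n"
    and G0: "G0 \<subseteq> GL p d"
    and conj_U: "\<And>g. g \<in> G0 \<Longrightarrow> g \<otimes>\<^bsub>GLgrp p d\<^esub> u \<otimes>\<^bsub>GLgrp p d\<^esub> inv\<^bsub>GLgrp p d\<^esub> g \<in> U"
    and hom: "homogeneous p d U"
    and W: "irr_submodule p d U W" and card_W: "card W = p ^ k"
    and fpf: "\<forall>x\<in>U. x \<noteq> \<one>\<^bsub>GLgrp p d\<^esub> \<longrightarrow> (\<forall>w\<in>W. w \<noteq> vzero \<longrightarrow> x w \<noteq> w)"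
  shows "card {g \<otimes>\<^bsub>GLgrp p d\<^esub> u \<otimes>\<^bsub>GLgrp p d\<^esub> inv\<^bsub>GLgrp p d\<^esub> g | g. g \<in> G0} \<le> k"
proof -
  have p0: "0 < p" using prime_gt_0_nat[OF p] .
  have u: "u \<in> GL p d" using uU subgroup.subset[OF U] by (auto simp: GLgrp_simps)
  obtain F where deg_F: "degree F \<le> k" and lc_F: "\<not> int p dvd lead_coeff F"
    and F_vanish: "\<forall>v\<in>vecs p d. poly_op p u F v = vzero"
    using exists_poly_op_vanishing[OF p U uU U_pow hom W card_W] by blast
  have "card {g \<otimes>\<^bsub>GLgrp p d\<^esub> u \<otimes>\<^bsub>GLgrp p d\<^esub> inv\<^bsub>GLgrp p d\<^esub> g | g. g \<in> G0} \<le> degree F"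
  proof (rule card_poly_op_roots_in_cyclic_le_degree[OF p U uU U_pow W fpf lc_F])
    show "{g \<otimes>\<^bsub>GLgrp p d\<^esub> u \<otimes>\<^bsub>GLgrp p d\<^esub> inv\<^bsub>GLgrp p d\<^esub> g | g. g \<in> G0} \<subseteq> U"
      using conj_U by blast
    show "\<forall>y\<in>{g \<otimes>\<^bsub>GLgrp p d\<^esub> u \<otimes>\<^bsub>GLgrp p d\<^esub> inv\<^bsub>GLgrp p d\<^esub> g | g. g \<in> G0}.
            \<forall>v\<in>vecs p d. poly_op p y F v = vzero"
      using poly_op_vanishes_conjugate[OF p0 u _ F_vanish] G0 by blast
  qed
  thus ?thesis using deg_F by simp
qed

section \<open>The order of \<open>G\<^sub>0\<close>\<close>

lemma (in group) card_conjugates_mult_card_centralizer: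
  assumes H: "subgroup H G" and u: "u \<in> H"
  shows "card {g \<otimes> u \<otimes> inv g | g. g \<in> H} * card {g \<in> H. g \<otimes> u = u \<otimes> g} = card H"
proof -
  interpret H: group "G\<lparr>carrier := H\<rparr>" using subgroup_imp_group[OF H] .
  have H_G: "H \<subseteq> carrier G" using subgroup.subset[OF H] .
  let ?\<phi> = "\<lambda>g. \<lambda>h\<in>H. g \<otimes> h \<otimes> inv\<^bsub>G\<lparr>carrier := H\<rparr>\<^esub> g"
  interpret conj: group_action "G\<lparr>carrier := H\<rparr>" H ?\<phi>
    using H.action_by_conjugation by simp
  have inv_eq: "inv\<^bsub>G\<lparr>carrier := H\<rparr>\<^esub> g = inv g" if "g \<in> H" for g
    using m_inv_consistent[OF H that] .
  have "orbit (G\<lparr>carrier := H\<rparr>) ?\<phi> u = {g \<otimes> u \<otimes> inv g | g. g \<in> H}"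
    unfolding orbit_def by (rule Collect_cong) (use u inv_eq in force)
  moreover have "stabilizer (G\<lparr>carrier := H\<rparr>) ?\<phi> u = {g \<in> H. g \<otimes> u = u \<otimes> g}"
  proof -
    have "g \<otimes> u \<otimes> inv g = u \<longleftrightarrow> g \<otimes> u = u \<otimes> g" if "g \<in> H" for g
      using that u H_G by (metis inv_solve_right m_closed subsetD inv_closed)
    moreover have "u \<in> carrier G" "\<And>g. g \<in> H \<Longrightarrow> g \<in> carrier G" using u H_G by blast+
    ultimately show ?thesis using u inv_eq by (auto simp: stabilizer_def m_assoc)
  qed
  ultimately show ?thesis using conj.orbit_stabilizer_theorem[OF u] by (simp add: Coset.order_def)
qed

lemma (in group) centralizer_in_cyclic:
  assumes H: "H \<subseteq> carrier G" and u: "u \<in> U" "u \<in> carrier G"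
    and U_pow: "\<And>x. x \<in> U \<Longrightarrow> \<exists>n::nat. x = u [^] n"
  shows "centralizer_in G H U = {g \<in> H. g \<otimes> u = u \<otimes> g}"
proof (intro equalityI subsetI)
  fix g assume "g \<in> centralizer_in G H U"
  thus "g \<in> {g \<in> H. g \<otimes> u = u \<otimes> g}" using u(1) by (simp add: centralizer_in_def)
next
  fix g assume g: "g \<in> {g \<in> H. g \<otimes> u = u \<otimes> g}"
  have "g \<otimes> x = x \<otimes> g" if x: "x \<in> U" for x
  proof -
    obtain n :: nat where "x = u [^] n" using U_pow[OF x] by blast
    moreover have "g \<in> carrier G" using g H by blast
    ultimately show ?thesis using group_commutes_pow[of u g n] g u(2) by simp
  qed
  thus "g \<in> centralizer_in G H U" using g by (simp add: centralizer_in_def)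
qed

lemma (in group) card_quotient_mult_card:
  assumes "subgroup K G" "subgroup H G" "H \<subseteq> K"
  shows "card (carrier (G\<lparr>carrier := K\<rparr> Mod H)) * card H = card K"
proof -
  interpret K: group "G\<lparr>carrier := K\<rparr>" using subgroup_imp_group[OF assms(1)] .
  have "subgroup H (G\<lparr>carrier := K\<rparr>)" using subgroup_incl[OF assms(2,1,3)] .
  thus ?thesis using K.lagrange by (simp add: FactGroup_def Coset.order_def)
qed

lemma (in monoid) foldr_mult_commute:
  assumes z: "z \<in> carrier G" and a: "a \<in> carrier G" "z \<otimes> a = a \<otimes> z"
    and xs: "\<And>i. i \<in> set l \<Longrightarrow> x i \<in> carrier G \<and> z \<otimes> x i = x i \<otimes> z"
  shows "foldr (\<lambda>i acc. x i \<otimes> acc) l a \<in> carrier G \<and>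
         z \<otimes> foldr (\<lambda>i acc. x i \<otimes> acc) l a = foldr (\<lambda>i acc. x i \<otimes> acc) l a \<otimes> z"
  using xs
proof (induction l)
  case (Cons i l)
  define r where "r = foldr (\<lambda>i acc. x i \<otimes> acc) l a"
  have r: "r \<in> carrier G" "z \<otimes> r = r \<otimes> z" using Cons by (auto simp: r_def)
  have xi: "x i \<in> carrier G" "z \<otimes> x i = x i \<otimes> z" using Cons.prems by auto
  have "z \<otimes> (x i \<otimes> r) = (x i \<otimes> z) \<otimes> r" using xi z r by (simp add: m_assoc[symmetric])
  also have "\<dots> = (x i \<otimes> r) \<otimes> z" using xi z r by (simp add: m_assoc)
  finally show ?case using xi r by (simp add: r_def)
qed (use a in simp)

lemma (in monoid) gprod_commute:
  assumes z: "z \<in> carrier G" and xs: "\<And>i. i < s \<Longrightarrow> x i \<in> carrier G \<and> z \<otimes> x i = x i \<otimes> z"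
  shows "gprod G s x \<in> carrier G \<and> z \<otimes> gprod G s x = gprod G s x \<otimes> z"
  unfolding gprod_def by (rule foldr_mult_commute) (use z xs in auto)

lemma (in group) gprod_in_centre_internal_direct_product:
  assumes E_prod: "internal_direct_product G E s Es"
    and Es_sub: "\<And>i. i < s \<Longrightarrow> Es i \<subseteq> carrier G"
    and x: "x \<in> Pi\<^sub>E {..<s} (\<lambda>i. centre G (Es i))"
  shows "gprod G s x \<in> centre G E"
proof -
  have bij: "bij_betw (gprod G s) (Pi\<^sub>E {..<s} Es) E"
    using E_prod unfolding internal_direct_product_def by blast
  have x_Es: "x i \<in> centre G (Es i)" if "i < s" for i using x that by auto
  have x_c: "x i \<in> carrier G" if "i < s" for i using x_Es Es_sub that by (auto simp: centre_def)
  have "x \<in> Pi\<^sub>E {..<s} Es" using x by (auto simp: centre_def PiE_def Pi_def)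
  hence "gprod G s x \<in> E" using bij by (auto simp: bij_betw_def)
  moreover have "gprod G s x \<otimes> h = h \<otimes> gprod G s x" if "h \<in> E" for h
  proof -
    obtain y where y: "y \<in> Pi\<^sub>E {..<s} Es" and h: "h = gprod G s y"
      using bij \<open>h \<in> E\<close> by (metis bij_betw_iff_bijections)
    have y_c: "y i \<in> carrier G" if "i < s" for i using y Es_sub that by (auto simp: PiE_def Pi_def)
    have xy: "x i \<otimes> y j = y j \<otimes> x i" if "i < s" "j < s" for i j
    proof (cases "i = j")
      case True
      moreover have "y i \<in> Es i" using y that by (auto simp: PiE_def)
      ultimately show ?thesis using x_Es[OF that(1)] by (simp add: centre_def)
    next
      case False
      moreover have "x i \<in> Es i" "y j \<in> Es j"
        using x_Es y that by (auto simp: centre_def PiE_def Pi_def)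
      ultimately show ?thesis using E_prod that unfolding internal_direct_product_def by blast
    qed
    have "gprod G s y \<in> carrier G" using gprod_commute[OF one_closed, of s y] y_c by simp
    moreover have "gprod G s y \<otimes> x i = x i \<otimes> gprod G s y" if "i < s" for i
      using gprod_commute[OF x_c[OF that], of s y] xy[OF that] y_c by simp
    ultimately show ?thesis using gprod_commute[of "gprod G s y" s x] x_c h by simp
  qed
  ultimately show ?thesis by (simp add: centre_def)
qed

lemma (in group) card_centre_internal_direct_product_ge:
  assumes E_prod: "internal_direct_product G E s Es"
    and Es_sub: "\<And>i. i < s \<Longrightarrow> Es i \<subseteq> carrier G"
    and finite_Es: "\<And>i. i < s \<Longrightarrow> finite (Es i)"
  shows "(\<Prod>i<s. card (centre G (Es i))) \<le> card (centre G E)"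
proof -
  have bij: "bij_betw (gprod G s) (Pi\<^sub>E {..<s} Es) E"
    using E_prod unfolding internal_direct_product_def by blast
  define C where "C = Pi\<^sub>E {..<s} (\<lambda>i. centre G (Es i))"
  have "C \<subseteq> Pi\<^sub>E {..<s} Es" by (auto simp: C_def centre_def PiE_def Pi_def)
  hence "inj_on (gprod G s) C" using bij unfolding bij_betw_def by (meson inj_on_subset)
  moreover have "gprod G s ` C \<subseteq> centre G E"
    using gprod_in_centre_internal_direct_product[OF E_prod Es_sub] by (auto simp: C_def)
  moreover have "finite (Pi\<^sub>E {..<s} Es)" using finite_Es by (intro finite_PiE) auto
  hence "finite (centre G E)"
    using bij_betw_finite[OF bij] by (auto intro: finite_subset[rotated] simp: centre_def)
  ultimately have "card C \<le> card (centre G E)" using card_inj_on_le by blast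
  thus ?thesis by (simp add: C_def card_PiE)
qed

lemma (in group) card_quotient_centre_extraspecial_product_le:
  assumes E: "subgroup E G" and Z: "subgroup (centre G E) G"
    and E_prod: "internal_direct_product G E s Es"
    and Es: "\<forall>i<s. extraspecial G (Es i) (q i) (m i)"
  shows "card (carrier (G\<lparr>carrier := E\<rparr> Mod centre G E)) \<le> (\<Prod>i<s. q i ^ m i) ^ 2"
proof -
  have Es_sub: "Es i \<subseteq> carrier G" if "i < s" for i
    using Es that subgroup.subset unfolding extraspecial_def by blast
  have q_pos: "0 < q i" if "i < s" for i
    using Es that prime_gt_0_nat unfolding extraspecial_def by blast
  have card_Es: "card (Es i) = q i ^ (2 * m i + 1)" and card_centre: "card (centre G (Es i)) = q i"
    if "i < s" for i using Es that unfolding extraspecial_def by blast+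
  have finite_Es: "finite (Es i)" if "i < s" for i
    using card_Es[OF that] q_pos[OF that] by (intro card_ge_0_finite) simp
  have "bij_betw (gprod G s) (Pi\<^sub>E {..<s} Es) E"
    using E_prod by (simp add: internal_direct_product_def)
  hence "card E = (\<Prod>i<s. q i ^ (2 * m i + 1))"
    by (simp add: bij_betw_same_card[symmetric] card_PiE card_Es)
  also have "\<dots> = (\<Prod>i<s. q i ^ m i) ^ 2 * (\<Prod>i<s. q i)"
    by (simp add: prod_power_distrib prod.distrib[symmetric] power_add power_mult[symmetric] mult.commute)
  finally have card_E: "card E = (\<Prod>i<s. q i ^ m i) ^ 2 * (\<Prod>i<s. q i)" .
  define t where "t = card (carrier (G\<lparr>carrier := E\<rparr> Mod centre G E))"
  have "centre G E \<subseteq> E" by (auto simp: centre_def)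
  have "t * (\<Prod>i<s. q i) \<le> t * card (centre G E)"
    using card_centre_internal_direct_product_ge[OF E_prod Es_sub finite_Es] card_centre by simp
  also have "\<dots> = (\<Prod>i<s. q i ^ m i) ^ 2 * (\<Prod>i<s. q i)"
    using card_quotient_mult_card[OF E Z \<open>centre G E \<subseteq> E\<close>] card_E by (simp add: t_def)
  finally show ?thesis using q_pos by (simp add: t_def prod_pos)
qed

lemma card_le_mult_card_centralizer_quasi_primitive:
  assumes p_prime: "Factorial_Ring.prime p"
    and G0_sub: "subgroup G0 (GLgrp p d)" and G0_qp: "quasi_primitive p d G0"
    and U_nml: "U \<lhd> (GLgrp p d)\<lparr>carrier := G0\<rparr>"
    and U_cyclic: "\<exists>u\<in>U. U = generate (GLgrp p d) {u}"
    and A_cent: "A = centralizer_in (GLgrp p d) G0 U"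
    and W_irr: "irr_submodule p d U W" and W_card: "card W = p ^ k"
    and U_fpf: "\<forall>u\<in>U. u \<noteq> \<one>\<^bsub>GLgrp p d\<^esub> \<longrightarrow> (\<forall>w\<in>W. w \<noteq> vzero \<longrightarrow> u w \<noteq> w)"
  shows "card G0 \<le> k * card A"
proof -
  have p0: "0 < p" using prime_gt_0_nat[OF p_prime] .
  interpret G: group "GLgrp p d" using group_GLgrp[OF p0] .
  have G0_GL: "G0 \<subseteq> GL p d" using subgroup.subset[OF G0_sub] by (simp add: GLgrp_simps)
  have U_G0: "subgroup U ((GLgrp p d)\<lparr>carrier := G0\<rparr>)" using normal_imp_subgroup[OF U_nml] .
  have U_sub: "subgroup U (GLgrp p d)" using G.incl_subgroup[OF G0_sub U_G0] .
  obtain u where u: "u \<in> U" and U_gen: "U = generate (GLgrp p d) {u}" using U_cyclic by blast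
  have u_G0: "u \<in> G0" using u subgroup.subset[OF U_G0] by auto
  have u_G: "u \<in> carrier (GLgrp p d)" using u U_sub subgroup.subset by blast
  have U_pow: "\<exists>n::nat. x = u [^]\<^bsub>GLgrp p d\<^esub> n" if "x \<in> U" for x
    using that G.generate_pow_on_finite_carrier[OF _ u_G] U_gen finite_GL[OF p0] by (auto simp: GLgrp_simps)
  have conj_U: "g \<otimes>\<^bsub>GLgrp p d\<^esub> u \<otimes>\<^bsub>GLgrp p d\<^esub> inv\<^bsub>GLgrp p d\<^esub> g \<in> U" if "g \<in> G0" for g
    using normal.inv_op_closed2[OF U_nml, of g u] G.m_inv_consistent[OF G0_sub that] that u by simp
  define conjugates where
    "conjugates = {g \<otimes>\<^bsub>GLgrp p d\<^esub> u \<otimes>\<^bsub>GLgrp p d\<^esub> inv\<^bsub>GLgrp p d\<^esub> g | g. g \<in> G0}"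
  have "homogeneous p d U" using G0_qp U_nml by (simp add: quasi_primitive_def)
  hence "card conjugates \<le> k"
    unfolding conjugates_def
    using card_conjugates_le[OF p_prime U_sub u U_pow G0_GL conj_U _ W_irr W_card U_fpf] by blast
  moreover have "A = {g \<in> G0. g \<otimes>\<^bsub>GLgrp p d\<^esub> u = u \<otimes>\<^bsub>GLgrp p d\<^esub> g}"
    using A_cent G.centralizer_in_cyclic[OF subgroup.subset[OF G0_sub] u u_G U_pow] by simp
  hence "card G0 = card conjugates * card A"
    using G.card_conjugates_mult_card_centralizer[OF G0_sub u_G0] by (simp add: conjugates_def)
  ultimately show ?thesis by simp
qed

lemma card_le_index_mult_central_product:
  assumes p: "0 < p"
    and A_sub: "subgroup A (GLgrp p d)" and F_sub: "subgroup F (GLgrp p d)"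
    and U_sub: "subgroup U (GLgrp p d)" and E_sub: "subgroup E (GLgrp p d)"
    and Z_sub: "subgroup (centre (GLgrp p d) E) (GLgrp p d)"
    and UF: "U \<subseteq> F" and FA: "F \<subseteq> A"
    and FU_iso: "((GLgrp p d)\<lparr>carrier := F\<rparr> Mod U) \<cong>
                 ((GLgrp p d)\<lparr>carrier := E\<rparr> Mod (centre (GLgrp p d) E))"
    and E_prod: "internal_direct_product (GLgrp p d) E s Es"
    and Es_extra: "\<forall>i<s. extraspecial (GLgrp p d) (Es i) (q i) (m i)"
    and e_def: "e = (\<Prod>i<s. q i ^ m i)"
  shows "card A \<le> (card A div card F) * e ^ 2 * card U"
proof -
  interpret G: group "GLgrp p d" using group_GLgrp[OF p] .
  have "finite F" using F_sub subgroup.subset finite_subset finite_GL[OF p] by (metis GLgrp_simps(1))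
  hence "0 < card F" using subgroup.one_closed[OF F_sub] by (auto simp: card_gt_0_iff)
  define t where "t = card (carrier ((GLgrp p d)\<lparr>carrier := E\<rparr> Mod centre (GLgrp p d) E))"
  have "card A = (card A div card F) * card F"
    using G.card_quotient_mult_card[OF A_sub F_sub FA] \<open>0 < card F\<close>
    by (metis nonzero_mult_div_cancel_right less_not_refl)
  also have "\<dots> = (card A div card F) * (t * card U)"
    using G.card_quotient_mult_card[OF F_sub U_sub UF] iso_same_card[OF FU_iso] by (simp add: t_def)
  also have "\<dots> \<le> (card A div card F) * (e ^ 2 * card U)"
    using G.card_quotient_centre_extraspecial_product_le[OF E_sub Z_sub E_prod Es_extra] e_def
    by (simp add: t_def)
  finally show ?thesis by (simp add: mult.assoc)
qed

section \<open>Counting orbits\<close>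

lemma card_le_card_orbits_mult:
  fixes V :: "'a set" and G :: "('a \<Rightarrow> 'a) set"
  assumes "finite V" "finite G" and self: "\<forall>v\<in>V. v \<in> (\<lambda>g. g v) ` G"
    and z: "z \<in> V" "\<forall>g\<in>G. g z = z"
  shows "card V - 1 \<le> (card ((\<lambda>v. (\<lambda>g. g v) ` G) ` V) - 1) * card G"
proof -
  define orb where "orb v = (\<lambda>g. g v) ` G" for v
  define Orbs where "Orbs = orb ` V"
  have "orb z = {z}" using self z by (auto simp: orb_def)
  hence z_orb: "{z} \<in> Orbs" using z by (auto simp: Orbs_def)
  have "finite Orbs" using \<open>finite V\<close> by (simp add: Orbs_def)
  have "V - {z} \<subseteq> \<Union>(Orbs - {{z}})"
  proof
    fix v assume v: "v \<in> V - {z}"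
    hence "v \<in> orb v" using self by (simp add: orb_def)
    moreover have "orb v \<in> Orbs - {{z}}" using v \<open>v \<in> orb v\<close> by (auto simp: Orbs_def)
    ultimately show "v \<in> \<Union>(Orbs - {{z}})" by blast
  qed
  moreover have card_orb: "card B \<le> card G" if "B \<in> Orbs" for B
    using that card_image_le[OF \<open>finite G\<close>] by (auto simp: Orbs_def orb_def)
  moreover have "finite B" if "B \<in> Orbs" for B
    using that \<open>finite G\<close> by (auto simp: Orbs_def orb_def)
  ultimately have "card (V - {z}) \<le> card (\<Union>(Orbs - {{z}}))"
    using \<open>finite Orbs\<close> by (intro card_mono) auto
  also have "\<dots> \<le> sum card (Orbs - {{z}})" by (rule card_Union_le_sum_card)
  also have "\<dots> \<le> card (Orbs - {{z}}) * card G"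
    using sum_bounded_above[of "Orbs - {{z}}" card "card G"] card_orb by simp
  finally show ?thesis using z_orb \<open>finite Orbs\<close> z by (simp add: Orbs_def orb_def)
qed

lemma rank_affine_orbit_count:
  assumes p: "0 < p" and G0: "subgroup G0 (GLgrp p d)"
  shows "card (vecs p d) - 1 \<le> (rank_affine p d G0 - 1) * card G0" and "0 < rank_affine p d G0"
proof -
  have G0_GL: "G0 \<subseteq> GL p d" using subgroup.subset[OF G0] by (simp add: GLgrp_simps)
  have one: "restrict id (vecs p d) \<in> G0" using subgroup.one_closed[OF G0] by (simp add: GLgrp_simps)
  show "card (vecs p d) - 1 \<le> (rank_affine p d G0 - 1) * card G0"
    unfolding rank_affine_def
  proof (rule card_le_card_orbits_mult)
    show "finite G0" using finite_subset[OF G0_GL finite_GL[OF p]] .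
    show "\<forall>v\<in>vecs p d. v \<in> (\<lambda>g. g v) ` G0" by (auto intro!: rev_image_eqI[OF one])
    show "\<forall>g\<in>G0. g vzero = vzero" using G0_GL endo_vzero[OF GL_endo p] by blast
  qed (use finite_vecs[OF p] vzero_in_vecs[OF p] in auto)
  show "0 < rank_affine p d G0"
    using finite_vecs[OF p] vzero_in_vecs[OF p] by (auto simp: rank_affine_def card_gt_0_iff)
qed

lemma ceiling_bound_from_orbit_count:
  fixes w N R g k a e :: nat
  assumes w: "2 \<le> w" and R: "0 < R"
    and N: "w ^ e \<le> N" and orbits: "N - 1 \<le> (R - 1) * g"
    and g: "g \<le> k * a * e ^ 2 * (w - 1)" and k: "real k \<le> log 2 w"
  shows "\<lceil>(real w ^ e - 1) / (log 2 (real w) * real a * real e ^ 2 * (real w - 1))\<rceil> + 1 \<le> int R"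
proof -
  define D where "D = log 2 (real w) * real a * real e ^ 2 * (real w - 1)"
  have "real w ^ e - 1 = real (w ^ e - 1)" using w by (simp add: of_nat_diff)
  also have "\<dots> \<le> real ((R - 1) * (k * a * e ^ 2 * (w - 1)))"
    using N orbits g by (intro of_nat_mono) (meson diff_le_mono le_trans mult_le_mono2)
  also have "\<dots> = real (R - 1) * (real k * real a * real e ^ 2 * (real w - 1))"
    using w by (simp add: of_nat_diff)
  also have "\<dots> \<le> real (R - 1) * D"
    unfolding D_def using k w by (intro mult_left_mono mult_right_mono) auto
  finally have bound: "real w ^ e - 1 \<le> real (R - 1) * D" .
  have "(real w ^ e - 1) / D \<le> real (R - 1)"
  proof (cases "D = 0")
    case False
    hence "0 < D" using w by (simp add: D_def zero_less_mult_iff)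
    thus ?thesis using bound by (simp add: divide_le_eq mult.commute)
  qed simp
  hence "\<lceil>(real w ^ e - 1) / D\<rceil> \<le> int (R - 1)" by (simp add: ceiling_le_iff)
  thus ?thesis using R by (simp add: D_def)
qed

theorem proposition2p3:
  fixes p d :: nat
    and G0 A F U E :: "lmap set" and W :: "vec set"
    and s :: nat and Es :: "nat \<Rightarrow> lmap set" and q m :: "nat \<Rightarrow> nat"
    and e k b :: nat
  assumes p_prime: "Factorial_Ring.prime p"
    and G0_sub: "subgroup G0 (GLgrp p d)"
    and G0_solv: "solvable ((GLgrp p d)\<lparr>carrier := G0\<rparr>)"
    and G0_irr: "irr_submodule p d G0 (vecs p d)"
    and G0_qp: "quasi_primitive p d G0"
    \<comment> \<open>chain Z(E) <= U <= F <= A <= G0, all normal in G0; E characteristic in F\<close>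
    and ZU: "centre (GLgrp p d) E \<subseteq> U" and UF: "U \<subseteq> F" and FA: "F \<subseteq> A" and AG0: "A \<subseteq> G0"
    and Z_nml: "centre (GLgrp p d) E \<lhd> (GLgrp p d)\<lparr>carrier := G0\<rparr>"
    and U_nml: "U \<lhd> (GLgrp p d)\<lparr>carrier := G0\<rparr>"
    and F_nml: "F \<lhd> (GLgrp p d)\<lparr>carrier := G0\<rparr>"
    and A_nml: "A \<lhd> (GLgrp p d)\<lparr>carrier := G0\<rparr>"
    and E_sub: "subgroup E (GLgrp p d)" and EF: "E \<subseteq> F"
    and E_char: "characteristic (GLgrp p d) E F"
    \<comment> \<open>(i) F = EU central product, E \<inter> U = Z(E)\<close>
    and F_EU: "F = E <#>\<^bsub>GLgrp p d\<^esub> U"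
    and E_U_comm: "\<forall>x\<in>E. \<forall>y\<in>U. x \<otimes>\<^bsub>GLgrp p d\<^esub> y = y \<otimes>\<^bsub>GLgrp p d\<^esub> x"
    and E_int_U: "E \<inter> U = centre (GLgrp p d) E"
    \<comment> \<open>(ii)\<close>
    and FU_iso: "((GLgrp p d)\<lparr>carrier := F\<rparr> Mod U) \<cong>
                 ((GLgrp p d)\<lparr>carrier := E\<rparr> Mod (centre (GLgrp p d) E))"
    and E_cr: "compl_reducible_section (GLgrp p d) G0 E (centre (GLgrp p d) E)"
    \<comment> \<open>(iii)\<close>
    and E_prod: "internal_direct_product (GLgrp p d) E s Es"
    and Es_extra: "\<forall>i<s. extraspecial (GLgrp p d) (Es i) (q i) (m i) \<and> m i \<ge> 1"
    and q_distinct: "inj_on q {..<s}"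
    and e_def: "e = (\<Prod>i<s. q i ^ m i)"
    and e_dvd: "e dvd d" and p_e_cop: "coprime p e"
    \<comment> \<open>(iv)\<close>
    and A_cent: "A = centralizer_in (GLgrp p d) G0 U"
    and AF_faithful: "\<forall>a\<in>A. (\<forall>x\<in>E. a \<otimes>\<^bsub>GLgrp p d\<^esub> x \<otimes>\<^bsub>GLgrp p d\<^esub> inv\<^bsub>GLgrp p d\<^esub> a
                                  \<otimes>\<^bsub>GLgrp p d\<^esub> inv\<^bsub>GLgrp p d\<^esub> x \<in> centre (GLgrp p d) E)
                           \<longrightarrow> a \<in> F"
    \<comment> \<open>(v)\<close>
    and U_cyclic: "\<exists>u\<in>U. U = generate (GLgrp p d) {u}"
    and W_irr: "irr_submodule p d U W"
    and U_fpf: "\<forall>u\<in>U. u \<noteq> \<one>\<^bsub>GLgrp p d\<^esub> \<longrightarrow> (\<forall>w\<in>W. w \<noteq> vzero \<longrightarrow> u w \<noteq> w)"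
    \<comment> \<open>(vi), (vii)\<close>
    and k_pos: "k \<ge> 1" and U_dvd: "card U dvd p ^ k - 1" and W_card: "card W = p ^ k"
    and b_pos: "b \<ge> 1" and V_card: "card (vecs p d) = card W ^ (e * b)" and d_eq: "d = b * k * e"
  shows "\<lceil>(real (card W) ^ e - 1) /
           (log 2 (real (card W)) * real (card A div card F) * real e ^ 2 * (real (card W) - 1))\<rceil> + 1
         \<le> int (rank_affine p d G0)"
proof -
  have p1: "1 < p" using prime_gt_1_nat[OF p_prime] .
  hence p0: "0 < p" by simp
  have subgroup_of_normal: "subgroup N (GLgrp p d)" if "N \<lhd> (GLgrp p d)\<lparr>carrier := G0\<rparr>" for N
    using group.incl_subgroup[OF group_GLgrp[OF p0] G0_sub normal_imp_subgroup[OF that]] .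
  have W_2: "2 \<le> card W" using power_increasing[OF k_pos, of p] p1 W_card by simp
  have "card G0 \<le> k * card A"
    by (rule card_le_mult_card_centralizer_quasi_primitive[OF p_prime G0_sub G0_qp U_nml U_cyclic
          A_cent W_irr W_card U_fpf])
  also have "\<dots> \<le> k * ((card A div card F) * e ^ 2 * card U)"
    using card_le_index_mult_central_product[OF p0 subgroup_of_normal[OF A_nml]
        subgroup_of_normal[OF F_nml] subgroup_of_normal[OF U_nml] E_sub subgroup_of_normal[OF Z_nml]
        UF FA FU_iso E_prod _ e_def] Es_extra by simp
  also have "\<dots> \<le> k * ((card A div card F) * e ^ 2 * (card W - 1))"
    using dvd_imp_le[OF U_dvd] W_card W_2 by simp
  finally have "card G0 \<le> k * (card A div card F) * e ^ 2 * (card W - 1)" by (simp add: mult.assoc)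
  moreover have "card W ^ e \<le> card (vecs p d)"
    using V_card b_pos W_2 by (simp add: power_increasing)
  moreover have "real k \<le> log 2 (real (card W))"
  proof -
    have "1 \<le> log 2 (real p)" using p1 by simp
    thus ?thesis using W_card mult_left_mono[of 1 "log 2 p" "real k"] by (simp add: log_nat_power)
  qed
  ultimately show ?thesis
    using ceiling_bound_from_orbit_count[OF W_2 rank_affine_orbit_count(2)[OF p0 G0_sub] _
        rank_affine_orbit_count(1)[OF p0 G0_sub]] by simp
qed

end
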